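(* Let $\{(n_i,\mathsf{G}_i)\}_{i\in I}$ be any family of pairs consisting of an integer $n_i\geq 1$ and a group $\mathsf{G}_i$, with $\mathsf{G}_i\not\cong\mathsf{G}_{i'}$ for $i\neq i'$. Let $\mathcal{G}_{\{(n_i,\mathsf{G}_i)\}_{i\in I}}=\coprod_{i\in I}\coprod^{n_i}\mathsf{G}_i$ (the coproduct of $n_i$ copies of the one-object groupoid $\mathsf{G}_i$, over all $i$). Then there is an isomorphism of 2-groups $$\mathbb{S}ym\big(\mathcal{G}_{\{(n_i,\mathsf{G}_i)\}_{i\in I}}\big)\;\cong\;\prod_{i\in I}\mathsf{S}_{n_i}\wr\wr\ \mathbb{S}ym(\mathsf{G}_i).$$
   Context: A 2-group is a monoidal groupoid $\mathbb{G}=(\mathcal{G},\otimes,e,a,l,r)$ (groupoid $\mathcal G$, tensor functor $\otimes$, unit object $e$, natural isomorphisms $a_{x,y,z}:x\otimes(y\otimes z)\to(x\otimes y)\otimes z$, $l_x:e\otimes x\to x$, $r_x:x\otimes e\to x$ satisfying pentagon and triangle axioms) in which every object $x$ has an object $x^*$ with $x\otimes x^*\cong e\cong x^*\otimes x$. Morphisms of 2-groups are strong monoidal functors; an isomorphism of 2-groups is a monoidal functor with a strict inverse monoidal functor. A group $\mathsf G$ is regarded as the one-object groupoid with morphisms the elements of $\mathsf G$. For a groupoid $\mathcal G$, $\mathbb{S}ym(\mathcal{G})$ is the 2-group whose objects are the self-equivalences (functors $\mathcal G\to\mathcal G$ that are equivalences) of $\mathcal G$, whose morphisms are natural isomorphisms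 between them, with tensor product given by composition of functors and horizontal composition of natural transformations and unit $id_{\mathcal G}$. The product $\prod_i\mathbb{G}_i$ of 2-groups is the product groupoid with tensor product, unit, associator and unitors defined componentwise. For a 2-group $\mathbb G$ and $n\ge1$, the wreath 2-product $\mathsf{S}_n\wr\wr\ \mathbb{G}$ is the 2-group whose objects are pairs $(\sigma,\mathbf{x})$ with $\sigma\in\mathsf S_n$ and $\mathbf x=(x_1,\dots,x_n)$ an $n$-tuple of objects of $\mathcal G$, whose morphisms $(\sigma,\mathbf x)\to(\sigma',\mathbf x')$ exist only if $\sigma=\sigma'$ and are the $n$-tuples $\mathbf f=(f_1,\dots,f_n)$ of morphisms $f_i:x_i\to x'_i$ (written $(id_\sigma,\mathbf f)$), composed componentwise, with tensor product $(\sigma,\mathbf{x})\otimes(\sigma',\mathbf{x}')=(\sigma\sigma',(\mathbf{x}\rhd\sigma')\otimes\mathbf{x}')$ and $(id_\sigma,\mathbf f)\otimes(id_{\sigma'},\mathbf f')=(id_{\sigma\sigma'},(\mathbf f\rhd\sigma')\otimes\mathbf f')$, where $\mathbf{x}\rhd\sigma:=(x_{\sigma(1)},\dots,x_{\sigma(n)})$ (similarly for tuples of morphisms) and $\otimes$ on $n$-tuples is componentwise; unit $(id,(e,\dots,e))$; associator $a_{(\sigma,\mathbf x),(\sigma',\mathbf x'),(\sigma'',\mathbf x'')}=(id_{\sigma\sigma'\sigma''},a_{\mathbf x\rhd(\sigma'\sigma''),\mathbf x'\rhd\sigma'',\mathbf x''})$ and unitors $l_{(\sigma,\mathbf x)}=(id_\sigma,l_{\mathbf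 x})$, $r_{(\sigma,\mathbf x)}=(id_\sigma,r_{\mathbf x})$, all computed componentwise in $\mathbb G$. *)

theory Defs
  imports "HOL-Algebra.Group" "HOL-Combinatorics.Permutations"
begin

text \<open>A category is given by a set of objects, hom-sets, composition
  (c_comp g f = g after f) and identities.  A monoidal groupoid additionally
  carries tensor on objects and morphisms, unit, associator
  a x y z : x (y z) -> (x y) z, and unitors.\<close>

record ('o, 'm) cat =
  c_obj :: "'o set"
  c_hom :: "'o \<Rightarrow> 'o \<Rightarrow> 'm set"
  c_comp :: "'m \<Rightarrow> 'm \<Rightarrow> 'm"
  c_id :: "'o \<Rightarrow> 'm"

record ('o, 'm) mcat = "('o, 'm) cat" +
  m_tens :: "'o \<Rightarrow> 'o \<Rightarrow> 'o"
  m_tensm :: "'m \<Rightarrow> 'm \<Rightarrow> 'm"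
  m_unit :: "'o"
  m_assoc :: "'o \<Rightarrow> 'o \<Rightarrow> 'o \<Rightarrow> 'm"
  m_lu :: "'o \<Rightarrow> 'm"
  m_ru :: "'o \<Rightarrow> 'm"

definition mor :: "('o, 'm, 'a) cat_scheme \<Rightarrow> 'm set" where
  "mor C = (\<Union>x\<in>c_obj C. \<Union>y\<in>c_obj C. c_hom C x y)"

definition is_iso_in :: "('o, 'm, 'a) cat_scheme \<Rightarrow> 'o \<Rightarrow> 'o \<Rightarrow> 'm \<Rightarrow> bool" where
  "is_iso_in C x y f \<longleftrightarrow> f \<in> c_hom C x y \<and>
     (\<exists>g\<in>c_hom C y x. c_comp C g f = c_id C x \<and> c_comp C f g = c_id C y)"

definition is_functor ::
  "('o, 'm, 'a) cat_scheme \<Rightarrow> ('p, 'n, 'b) cat_scheme \<Rightarrow> ('o \<Rightarrow> 'p) \<times> ('m \<Rightarrow> 'n) \<Rightarrow> bool" where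
  "is_functor C D F \<longleftrightarrow>
     (\<forall>x\<in>c_obj C. fst F x \<in> c_obj D) \<and>
     (\<forall>x\<in>c_obj C. \<forall>y\<in>c_obj C. \<forall>f\<in>c_hom C x y. snd F f \<in> c_hom D (fst F x) (fst F y)) \<and>
     (\<forall>x\<in>c_obj C. \<forall>y\<in>c_obj C. \<forall>z\<in>c_obj C. \<forall>f\<in>c_hom C x y. \<forall>g\<in>c_hom C y z.
        snd F (c_comp C g f) = c_comp D (snd F g) (snd F f)) \<and>
     (\<forall>x\<in>c_obj C. snd F (c_id C x) = c_id D (fst F x))"

definition nat_trans ::
  "('o, 'm, 'a) cat_scheme \<Rightarrow> ('p, 'n, 'b) cat_scheme \<Rightarrow> ('o \<Rightarrow> 'p) \<times> ('m \<Rightarrow> 'n)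
    \<Rightarrow> ('o \<Rightarrow> 'p) \<times> ('m \<Rightarrow> 'n) \<Rightarrow> ('o \<Rightarrow> 'n) \<Rightarrow> bool" where
  "nat_trans C D F F' \<alpha> \<longleftrightarrow>
     (\<forall>x\<in>c_obj C. \<alpha> x \<in> c_hom D (fst F x) (fst F' x)) \<and>
     (\<forall>x\<in>c_obj C. \<forall>y\<in>c_obj C. \<forall>f\<in>c_hom C x y.
        c_comp D (\<alpha> y) (snd F f) = c_comp D (snd F' f) (\<alpha> x))"

definition nat_iso ::
  "('o, 'm, 'a) cat_scheme \<Rightarrow> ('p, 'n, 'b) cat_scheme \<Rightarrow> ('o \<Rightarrow> 'p) \<times> ('m \<Rightarrow> 'n)
    \<Rightarrow> ('o \<Rightarrow> 'p) \<times> ('m \<Rightarrow> 'n) \<Rightarrow> ('o \<Rightarrow> 'n) \<Rightarrow> bool" where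
  "nat_iso C D F F' \<alpha> \<longleftrightarrow> nat_trans C D F F' \<alpha> \<and>
     (\<forall>x\<in>c_obj C. is_iso_in D (fst F x) (fst F' x) (\<alpha> x))"

definition fcomp :: "('b \<Rightarrow> 'c) \<times> ('n \<Rightarrow> 'p) \<Rightarrow> ('a \<Rightarrow> 'b) \<times> ('m \<Rightarrow> 'n) \<Rightarrow> ('a \<Rightarrow> 'c) \<times> ('m \<Rightarrow> 'p)" where
  "fcomp F G = (fst F \<circ> fst G, snd F \<circ> snd G)"

definition is_equivalence ::
  "('o, 'm, 'a) cat_scheme \<Rightarrow> ('p, 'n, 'b) cat_scheme \<Rightarrow> ('o \<Rightarrow> 'p) \<times> ('m \<Rightarrow> 'n) \<Rightarrow> bool" where
  "is_equivalence C D F \<longleftrightarrow> is_functor C D F \<and>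
     (\<exists>G \<eta> \<epsilon>. is_functor D C G \<and> nat_iso C C (id, id) (fcomp G F) \<eta> \<and>
               nat_iso D D (fcomp F G) (id, id) \<epsilon>)"

text \<open>Functors are represented extensionally (undefined off objects/morphisms),
  so that each functor has a unique representative.\<close>

definition ext_functor :: "('o, 'm, 'a) cat_scheme \<Rightarrow> ('o \<Rightarrow> 'o) \<times> ('m \<Rightarrow> 'm) \<Rightarrow> bool" where
  "ext_functor C F \<longleftrightarrow> fst F \<in> extensional (c_obj C) \<and> snd F \<in> extensional (mor C)"

definition monoidal_functor ::
  "('o, 'm, 'a) mcat_scheme \<Rightarrow> ('p, 'n, 'b) mcat_scheme \<Rightarrow> ('o \<Rightarrow> 'p) \<times> ('m \<Rightarrow> 'n)
    \<Rightarrow> ('o \<Rightarrow> 'o \<Rightarrow> 'n) \<Rightarrow> 'n \<Rightarrow> bool" where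
  "monoidal_functor A B F \<mu> \<epsilon> \<longleftrightarrow> is_functor A B F \<and>
     (\<forall>x\<in>c_obj A. \<forall>y\<in>c_obj A.
        is_iso_in B (m_tens B (fst F x) (fst F y)) (fst F (m_tens A x y)) (\<mu> x y)) \<and>
     (\<forall>x\<in>c_obj A. \<forall>x'\<in>c_obj A. \<forall>y\<in>c_obj A. \<forall>y'\<in>c_obj A.
        \<forall>f\<in>c_hom A x x'. \<forall>g\<in>c_hom A y y'.
        c_comp B (\<mu> x' y') (m_tensm B (snd F f) (snd F g))
          = c_comp B (snd F (m_tensm A f g)) (\<mu> x y)) \<and>
     is_iso_in B (m_unit B) (fst F (m_unit A)) \<epsilon> \<and>
     (\<forall>x\<in>c_obj A. \<forall>y\<in>c_obj A. \<forall>z\<in>c_obj A.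
        c_comp B (snd F (m_assoc A x y z))
          (c_comp B (\<mu> x (m_tens A y z)) (m_tensm B (c_id B (fst F x)) (\<mu> y z)))
        = c_comp B (\<mu> (m_tens A x y) z)
          (c_comp B (m_tensm B (\<mu> x y) (c_id B (fst F z)))
                    (m_assoc B (fst F x) (fst F y) (fst F z)))) \<and>
     (\<forall>x\<in>c_obj A.
        c_comp B (snd F (m_lu A x))
          (c_comp B (\<mu> (m_unit A) x) (m_tensm B \<epsilon> (c_id B (fst F x))))
        = m_lu B (fst F x)) \<and>
     (\<forall>x\<in>c_obj A.
        c_comp B (snd F (m_ru A x))
          (c_comp B (\<mu> x (m_unit A)) (m_tensm B (c_id B (fst F x)) \<epsilon>))
        = m_ru B (fst F x))"

definition two_group_iso :: "('o, 'm, 'a) mcat_scheme \<Rightarrow> ('p, 'n, 'b) mcat_scheme \<Rightarrow> bool" where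
  "two_group_iso A B \<longleftrightarrow>
     (\<exists>F \<mu> \<epsilon> G \<nu> \<delta>. monoidal_functor A B F \<mu> \<epsilon> \<and> monoidal_functor B A G \<nu> \<delta> \<and>
        (\<forall>x\<in>c_obj A. fst G (fst F x) = x) \<and> (\<forall>f\<in>mor A. snd G (snd F f) = f) \<and>
        (\<forall>y\<in>c_obj B. fst F (fst G y) = y) \<and> (\<forall>g\<in>mor B. snd F (snd G g) = g))"

definition fcomp_r :: "('o, 'm, 'a) cat_scheme \<Rightarrow> ('o \<Rightarrow> 'o) \<times> ('m \<Rightarrow> 'm)
    \<Rightarrow> ('o \<Rightarrow> 'o) \<times> ('m \<Rightarrow> 'm) \<Rightarrow> ('o \<Rightarrow> 'o) \<times> ('m \<Rightarrow> 'm)" where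
  "fcomp_r C F G = (\<lambda>x\<in>c_obj C. fst F (fst G x), \<lambda>f\<in>mor C. snd F (snd G f))"

definition Sym_2grp :: "('o, 'm) cat \<Rightarrow>
   (('o \<Rightarrow> 'o) \<times> ('m \<Rightarrow> 'm),
    (('o \<Rightarrow> 'o) \<times> ('m \<Rightarrow> 'm)) \<times> (('o \<Rightarrow> 'o) \<times> ('m \<Rightarrow> 'm)) \<times> ('o \<Rightarrow> 'm)) mcat" where
  "Sym_2grp C =
    (let Ob = {F. is_equivalence C C F \<and> ext_functor C F} in
    \<lparr> c_obj = Ob,
      c_hom = (\<lambda>F F'. if F \<in> Ob \<and> F' \<in> Ob
                 then {(F, F', \<alpha>) | \<alpha>. nat_iso C C F F' \<alpha> \<and> \<alpha> \<in> extensional (c_obj C)}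
                 else {}),
      c_comp = (\<lambda>(G, H, \<beta>) (F, G', \<alpha>). (F, H, \<lambda>x\<in>c_obj C. c_comp C (\<beta> x) (\<alpha> x))),
      c_id = (\<lambda>F. (F, F, \<lambda>x\<in>c_obj C. c_id C (fst F x))),
      m_tens = fcomp_r C,
      m_tensm = (\<lambda>(F, G, \<alpha>) (F', G', \<alpha>').
                   (fcomp_r C F F', fcomp_r C G G',
                    \<lambda>x\<in>c_obj C. c_comp C (\<alpha> (fst G' x)) (snd F (\<alpha>' x)))),
      m_unit = (\<lambda>x\<in>c_obj C. x, \<lambda>f\<in>mor C. f),
      m_assoc = (\<lambda>F G H. (fcomp_r C F (fcomp_r C G H), fcomp_r C (fcomp_r C F G) H,
                          \<lambda>x\<in>c_obj C. c_id C (fst F (fst G (fst H x))))),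
      m_lu = (\<lambda>F. (fcomp_r C (\<lambda>x\<in>c_obj C. x, \<lambda>f\<in>mor C. f) F, F,
                   \<lambda>x\<in>c_obj C. c_id C (fst F x))),
      m_ru = (\<lambda>F. (fcomp_r C F (\<lambda>x\<in>c_obj C. x, \<lambda>f\<in>mor C. f), F,
                   \<lambda>x\<in>c_obj C. c_id C (fst F x))) \<rparr>)"

text \<open>Objects (sigma, x) with sigma a permutation of {1..n} and x an n-tuple
  (function on {1..n}); morphisms (sigma, f).  (x |> sigma)_k = x_(sigma k).\<close>

definition wreath :: "nat \<Rightarrow> ('o, 'm) mcat \<Rightarrow>
   ((nat \<Rightarrow> nat) \<times> (nat \<Rightarrow> 'o), (nat \<Rightarrow> nat) \<times> (nat \<Rightarrow> 'm)) mcat" where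
  "wreath n M =
    (let Ob = {(\<sigma>, x). \<sigma> permutes {1..n} \<and> x \<in> extensional {1..n} \<and>
                        (\<forall>k\<in>{1..n}. x k \<in> c_obj M)} in
    \<lparr> c_obj = Ob,
      c_hom = (\<lambda>(\<sigma>, x) (\<sigma>', x'). if (\<sigma>, x) \<in> Ob \<and> (\<sigma>', x') \<in> Ob \<and> \<sigma> = \<sigma>'
                 then {(\<sigma>, f) | f. f \<in> extensional {1..n} \<and>
                                   (\<forall>k\<in>{1..n}. f k \<in> c_hom M (x k) (x' k))}
                 else {}),
      c_comp = (\<lambda>(\<sigma>, g) (\<sigma>', f). (\<sigma>, \<lambda>k\<in>{1..n}. c_comp M (g k) (f k))),
      c_id = (\<lambda>(\<sigma>, x). (\<sigma>, \<lambda>k\<in>{1..n}. c_id M (x k))),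
      m_tens = (\<lambda>(\<sigma>, x) (\<sigma>', x'). (\<sigma> \<circ> \<sigma>', \<lambda>k\<in>{1..n}. m_tens M (x (\<sigma>' k)) (x' k))),
      m_tensm = (\<lambda>(\<sigma>, f) (\<sigma>', f'). (\<sigma> \<circ> \<sigma>', \<lambda>k\<in>{1..n}. m_tensm M (f (\<sigma>' k)) (f' k))),
      m_unit = (id, \<lambda>k\<in>{1..n}. m_unit M),
      m_assoc = (\<lambda>(\<sigma>, x) (\<sigma>', x') (\<sigma>'', x'').
                   (\<sigma> \<circ> \<sigma>' \<circ> \<sigma>'',
                    \<lambda>k\<in>{1..n}. m_assoc M (x (\<sigma>' (\<sigma>'' k))) (x' (\<sigma>'' k)) (x'' k))),
      m_lu = (\<lambda>(\<sigma>, x). (\<sigma>, \<lambda>k\<in>{1..n}. m_lu M (x k))),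
      m_ru = (\<lambda>(\<sigma>, x). (\<sigma>, \<lambda>k\<in>{1..n}. m_ru M (x k))) \<rparr>)"

definition prod_mcat :: "'i set \<Rightarrow> ('i \<Rightarrow> ('o, 'm) mcat) \<Rightarrow> ('i \<Rightarrow> 'o, 'i \<Rightarrow> 'm) mcat" where
  "prod_mcat I M =
    \<lparr> c_obj = (\<Pi>\<^sub>E i\<in>I. c_obj (M i)),
      c_hom = (\<lambda>x y. if x \<in> (\<Pi>\<^sub>E i\<in>I. c_obj (M i)) \<and> y \<in> (\<Pi>\<^sub>E i\<in>I. c_obj (M i))
                      then (\<Pi>\<^sub>E i\<in>I. c_hom (M i) (x i) (y i)) else {}),
      c_comp = (\<lambda>g f. \<lambda>i\<in>I. c_comp (M i) (g i) (f i)),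
      c_id = (\<lambda>x. \<lambda>i\<in>I. c_id (M i) (x i)),
      m_tens = (\<lambda>x y. \<lambda>i\<in>I. m_tens (M i) (x i) (y i)),
      m_tensm = (\<lambda>f g. \<lambda>i\<in>I. m_tensm (M i) (f i) (g i)),
      m_unit = (\<lambda>i\<in>I. m_unit (M i)),
      m_assoc = (\<lambda>x y z. \<lambda>i\<in>I. m_assoc (M i) (x i) (y i) (z i)),
      m_lu = (\<lambda>x. \<lambda>i\<in>I. m_lu (M i) (x i)),
      m_ru = (\<lambda>x. \<lambda>i\<in>I. m_ru (M i) (x i)) \<rparr>"

definition grp_cat :: "'g monoid \<Rightarrow> (unit, 'g) cat" where
  "grp_cat G = \<lparr> c_obj = {()}, c_hom = (\<lambda>_ _. carrier G),
                 c_comp = (\<lambda>g h. g \<otimes>\<^bsub>G\<^esub> h), c_id = (\<lambda>_. \<one>\<^bsub>G\<^esub>) \<rparr>"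

definition coprod_cat :: "'i set \<Rightarrow> ('i \<Rightarrow> nat) \<Rightarrow> ('i \<Rightarrow> 'g monoid) \<Rightarrow> ('i \<times> nat, 'i \<times> nat \<times> 'g) cat" where
  "coprod_cat I n G =
    (let Ob = {(i, k). i \<in> I \<and> k \<in> {1..n i}} in
    \<lparr> c_obj = Ob,
      c_hom = (\<lambda>(i, k) (j, l). if (i, k) \<in> Ob \<and> (i, k) = (j, l)
                 then {(i, k, g) | g. g \<in> carrier (G i)} else {}),
      c_comp = (\<lambda>(i, k, g) (j, l, h). (i, k, g \<otimes>\<^bsub>G i\<^esub> h)),
      c_id = (\<lambda>(i, k). (i, k, \<one>\<^bsub>G i\<^esub>)) \<rparr>)"

end

theory Submission
  imports Defs "HOL-Algebra.Bij"
begin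

text \<open>A self-equivalence \<open>F\<close> of the coproduct of \<open>n i\<close> copies of each \<open>G i\<close> sends every
  copy of \<open>G i\<close> to a copy of some \<open>G j\<close>, and its action on arrows is an isomorphism
  \<open>G i \<rightarrow> G j\<close>, because composing it with the action of a quasi-inverse gives inner
  automorphisms (naturality of unit and counit). As the groups are pairwise non-isomorphic,
  \<open>F\<close> permutes the copies of each \<open>G i\<close> among themselves and acts on each copy by an
  automorphism, which is exactly an object of the product of the wreath 2-products; natural
  isomorphisms are families of elements conjugating these automorphisms into each other,
  which are exactly its arrows. In this form the comparison is a bijection on objects and
  arrows that preserves composition, tensor, unit and coherence isomorphisms strictly, and
  such a bijection is an isomorphism of 2-groups with identity coherence data.\<close>

section \<open>Strict isomorphisms of monoidal groupoids\<close>

text \<open>Only the laws needed to see that a functor preserving all structure on the nose is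
  monoidal with identity coherence data.\<close>

locale mcat_basic =
  fixes M :: "('o, 'm, 'a) mcat_scheme"
  assumes unit_obj: "m_unit M \<in> c_obj M"
    and tens_obj: "\<lbrakk>x \<in> c_obj M; y \<in> c_obj M\<rbrakk> \<Longrightarrow> m_tens M x y \<in> c_obj M"
    and id_hom: "x \<in> c_obj M \<Longrightarrow> c_id M x \<in> c_hom M x x"
    and comp_hom: "\<lbrakk>x \<in> c_obj M; y \<in> c_obj M; z \<in> c_obj M; f \<in> c_hom M x y; g \<in> c_hom M y z\<rbrakk>
        \<Longrightarrow> c_comp M g f \<in> c_hom M x z"
    and id_left: "\<lbrakk>x \<in> c_obj M; y \<in> c_obj M; f \<in> c_hom M x y\<rbrakk> \<Longrightarrow> c_comp M (c_id M y) f = f"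
    and id_right: "\<lbrakk>x \<in> c_obj M; y \<in> c_obj M; f \<in> c_hom M x y\<rbrakk> \<Longrightarrow> c_comp M f (c_id M x) = f"
    and tensm_hom: "\<lbrakk>x \<in> c_obj M; x' \<in> c_obj M; y \<in> c_obj M; y' \<in> c_obj M;
        f \<in> c_hom M x x'; g \<in> c_hom M y y'\<rbrakk>
        \<Longrightarrow> m_tensm M f g \<in> c_hom M (m_tens M x y) (m_tens M x' y')"
    and tensm_id: "\<lbrakk>x \<in> c_obj M; y \<in> c_obj M\<rbrakk>
        \<Longrightarrow> m_tensm M (c_id M x) (c_id M y) = c_id M (m_tens M x y)"
    and assoc_hom: "\<lbrakk>x \<in> c_obj M; y \<in> c_obj M; z \<in> c_obj M\<rbrakk>
        \<Longrightarrow> m_assoc M x y z \<in> c_hom M (m_tens M x (m_tens M y z)) (m_tens M (m_tens M x y) z)"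
    and lu_hom: "x \<in> c_obj M \<Longrightarrow> m_lu M x \<in> c_hom M (m_tens M (m_unit M) x) x"
    and ru_hom: "x \<in> c_obj M \<Longrightarrow> m_ru M x \<in> c_hom M (m_tens M x (m_unit M)) x"

lemma mor_iff: "f \<in> mor C \<longleftrightarrow> (\<exists>x\<in>c_obj C. \<exists>y\<in>c_obj C. f \<in> c_hom C x y)"
  unfolding mor_def by blast

lemma is_functorI:
  assumes "\<And>x. x \<in> c_obj C \<Longrightarrow> fst F x \<in> c_obj D"
    and "\<And>x y f. \<lbrakk>x \<in> c_obj C; y \<in> c_obj C; f \<in> c_hom C x y\<rbrakk> \<Longrightarrow> snd F f \<in> c_hom D (fst F x) (fst F y)"
    and "\<And>x y z f g. \<lbrakk>x \<in> c_obj C; y \<in> c_obj C; z \<in> c_obj C; f \<in> c_hom C x y; g \<in> c_hom C y z\<rbrakk>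
        \<Longrightarrow> snd F (c_comp C g f) = c_comp D (snd F g) (snd F f)"
    and "\<And>x. x \<in> c_obj C \<Longrightarrow> snd F (c_id C x) = c_id D (fst F x)"
  shows "is_functor C D F"
  unfolding is_functor_def using assms by blast

lemma is_functorD:
  assumes "is_functor C D F"
  shows functor_obj: "x \<in> c_obj C \<Longrightarrow> fst F x \<in> c_obj D"
    and functor_hom: "\<lbrakk>x \<in> c_obj C; y \<in> c_obj C; f \<in> c_hom C x y\<rbrakk> \<Longrightarrow> snd F f \<in> c_hom D (fst F x) (fst F y)"
    and functor_comp: "\<lbrakk>x \<in> c_obj C; y \<in> c_obj C; z \<in> c_obj C; f \<in> c_hom C x y; g \<in> c_hom C y z\<rbrakk>
        \<Longrightarrow> snd F (c_comp C g f) = c_comp D (snd F g) (snd F f)"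
    and functor_id: "x \<in> c_obj C \<Longrightarrow> snd F (c_id C x) = c_id D (fst F x)"
  using assms unfolding is_functor_def by blast+

lemma is_equivalence_if_inverse:
  assumes F: "is_functor C C F" and Q: "is_functor C C Q"
    and QF_obj: "\<And>x. x \<in> c_obj C \<Longrightarrow> fst Q (fst F x) = x"
    and QF_mor: "\<And>f. f \<in> mor C \<Longrightarrow> snd Q (snd F f) = f"
    and FQ_obj: "\<And>x. x \<in> c_obj C \<Longrightarrow> fst F (fst Q x) = x"
    and FQ_mor: "\<And>f. f \<in> mor C \<Longrightarrow> snd F (snd Q f) = f"
    and id_hom: "\<And>x. x \<in> c_obj C \<Longrightarrow> c_id C x \<in> c_hom C x x"
    and id_left: "\<And>x y f. \<lbrakk>x \<in> c_obj C; y \<in> c_obj C; f \<in> c_hom C x y\<rbrakk> \<Longrightarrow> c_comp C (c_id C y) f = f"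
    and id_right: "\<And>x y f. \<lbrakk>x \<in> c_obj C; y \<in> c_obj C; f \<in> c_hom C x y\<rbrakk> \<Longrightarrow> c_comp C f (c_id C x) = f"
  shows "is_equivalence C C F"
proof -
  have mor: "f \<in> mor C" if "x \<in> c_obj C" "y \<in> c_obj C" "f \<in> c_hom C x y" for x y f
    using that unfolding mor_iff by blast
  have id_iso: "is_iso_in C x x (c_id C x)" if "x \<in> c_obj C" for x
    unfolding is_iso_in_def using id_hom id_left that by metis
  have "nat_iso C C (id, id) (fcomp Q F) (c_id C)"
    unfolding nat_iso_def nat_trans_def fcomp_def
    using id_hom id_left id_right QF_obj QF_mor mor id_iso by auto
  moreover have "nat_iso C C (fcomp F Q) (id, id) (c_id C)"
    unfolding nat_iso_def nat_trans_def fcomp_def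
    using id_hom id_left id_right FQ_obj FQ_mor mor id_iso by auto
  ultimately show ?thesis
    unfolding is_equivalence_def using F Q by blast
qed

locale strict_monoidal_functor =
  fixes X :: "('o, 'm, 'a) mcat_scheme" and Y :: "('p, 'n, 'b) mcat_scheme"
    and H :: "('o \<Rightarrow> 'p) \<times> ('m \<Rightarrow> 'n)"
  assumes functor_H: "is_functor X Y H"
    and preserves_tens: "\<lbrakk>x \<in> c_obj X; y \<in> c_obj X\<rbrakk>
        \<Longrightarrow> fst H (m_tens X x y) = m_tens Y (fst H x) (fst H y)"
    and preserves_tensm: "\<lbrakk>x \<in> c_obj X; x' \<in> c_obj X; y \<in> c_obj X; y' \<in> c_obj X;
        f \<in> c_hom X x x'; g \<in> c_hom X y y'\<rbrakk>
        \<Longrightarrow> snd H (m_tensm X f g) = m_tensm Y (snd H f) (snd H g)"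
    and preserves_unit: "fst H (m_unit X) = m_unit Y"
    and preserves_assoc: "\<lbrakk>x \<in> c_obj X; y \<in> c_obj X; z \<in> c_obj X\<rbrakk>
        \<Longrightarrow> snd H (m_assoc X x y z) = m_assoc Y (fst H x) (fst H y) (fst H z)"
    and preserves_lu: "x \<in> c_obj X \<Longrightarrow> snd H (m_lu X x) = m_lu Y (fst H x)"
    and preserves_ru: "x \<in> c_obj X \<Longrightarrow> snd H (m_ru X x) = m_ru Y (fst H x)"
begin

lemmas obj = functor_obj[OF functor_H]
  and hom = functor_hom[OF functor_H]
  and preserves_comp = functor_comp[OF functor_H]
  and preserves_id = functor_id[OF functor_H]

lemma monoidal_functor:
  assumes "mcat_basic X"
  shows "monoidal_functor X Y H (\<lambda>x y. c_id Y (fst H (m_tens X x y))) (c_id Y (m_unit Y))"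
proof -
  interpret X: mcat_basic X by fact
  have id_left: "c_comp Y (c_id Y (fst H y)) (snd H f) = snd H f"
    and id_right: "c_comp Y (snd H f) (c_id Y (fst H x)) = snd H f"
    if "x \<in> c_obj X" "y \<in> c_obj X" "f \<in> c_hom X x y" for x y f
    using that by (metis X.id_hom X.id_left X.id_right preserves_comp preserves_id)+
  have id_idem: "c_comp Y (c_id Y (fst H x)) (c_id Y (fst H x)) = c_id Y (fst H x)"
    if "x \<in> c_obj X" for x
    using id_left[OF that that X.id_hom[OF that]] by (simp add: preserves_id that)
  have id_iso: "is_iso_in Y (fst H x) (fst H x) (c_id Y (fst H x))" if "x \<in> c_obj X" for x
    using that hom[OF that that X.id_hom] id_idem
    unfolding is_iso_in_def by (metis preserves_id)
  have tens_id: "m_tensm Y (c_id Y (fst H x)) (c_id Y (fst H y)) = c_id Y (fst H (m_tens X x y))"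
    if "x \<in> c_obj X" "y \<in> c_obj X" for x y
    using that by (metis X.id_hom X.tens_obj X.tensm_id preserves_id preserves_tensm)
  note objs = X.tens_obj X.unit_obj
  show ?thesis
    unfolding monoidal_functor_def
  proof (intro conjI ballI)
    fix x y z assume xyz: "x \<in> c_obj X" "y \<in> c_obj X" "z \<in> c_obj X"
    show "is_iso_in Y (m_tens Y (fst H x) (fst H y)) (fst H (m_tens X x y)) (c_id Y (fst H (m_tens X x y)))"
      using id_iso[of "m_tens X x y"] xyz by (simp add: preserves_tens X.tens_obj)
    show "c_comp Y (snd H (m_assoc X x y z))
            (c_comp Y (c_id Y (fst H (m_tens X x (m_tens X y z))))
               (m_tensm Y (c_id Y (fst H x)) (c_id Y (fst H (m_tens X y z)))))
        = c_comp Y (c_id Y (fst H (m_tens X (m_tens X x y) z)))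
            (c_comp Y (m_tensm Y (c_id Y (fst H (m_tens X x y))) (c_id Y (fst H z)))
               (m_assoc Y (fst H x) (fst H y) (fst H z)))"
      using xyz id_left[OF _ _ X.assoc_hom[OF xyz]] id_right[OF _ _ X.assoc_hom[OF xyz]]
      by (simp add: tens_id id_idem objs flip: preserves_assoc)
  next
    fix x x' y y' f g
    assume xy: "x \<in> c_obj X" "x' \<in> c_obj X" "y \<in> c_obj X" "y' \<in> c_obj X"
      and fg: "f \<in> c_hom X x x'" "g \<in> c_hom X y y'"
    note fg_hom = X.tensm_hom[OF xy fg]
    show "c_comp Y (c_id Y (fst H (m_tens X x' y'))) (m_tensm Y (snd H f) (snd H g))
        = c_comp Y (snd H (m_tensm X f g)) (c_id Y (fst H (m_tens X x y)))"
      using xy fg id_left[OF _ _ fg_hom] id_right[OF _ _ fg_hom]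
      by (simp add: objs flip: preserves_tensm)
  next
    show "is_iso_in Y (m_unit Y) (fst H (m_unit X)) (c_id Y (m_unit Y))"
      using id_iso[OF X.unit_obj] by (simp add: preserves_unit)
  next
    fix x assume x: "x \<in> c_obj X"
    show "c_comp Y (snd H (m_lu X x))
            (c_comp Y (c_id Y (fst H (m_tens X (m_unit X) x))) (m_tensm Y (c_id Y (m_unit Y)) (c_id Y (fst H x))))
        = m_lu Y (fst H x)"
      using x X.lu_hom[OF x] 
      by (simp add: id_left id_right tens_id id_idem objs flip: preserves_unit preserves_lu)
    show "c_comp Y (snd H (m_ru X x))
            (c_comp Y (c_id Y (fst H (m_tens X x (m_unit X)))) (m_tensm Y (c_id Y (fst H x)) (c_id Y (m_unit Y))))
        = m_ru Y (fst H x)"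
      using x X.ru_hom[OF x] 
      by (simp add: id_left id_right tens_id id_idem objs flip: preserves_unit preserves_ru)
  qed (rule functor_H)
qed

end

locale strict_monoidal_iso =
  B: mcat_basic B + K: strict_monoidal_functor B A K
  for B :: "('p, 'n, 'b) mcat_scheme" and A :: "('o, 'm, 'a) mcat_scheme" and K +
  fixes F :: "('o \<Rightarrow> 'p) \<times> ('m \<Rightarrow> 'n)"
  assumes F_obj: "x \<in> c_obj A \<Longrightarrow> fst F x \<in> c_obj B"
    and F_hom: "\<lbrakk>x \<in> c_obj A; y \<in> c_obj A; f \<in> c_hom A x y\<rbrakk> \<Longrightarrow> snd F f \<in> c_hom B (fst F x) (fst F y)"
    and KF_obj: "x \<in> c_obj A \<Longrightarrow> fst K (fst F x) = x"
    and KF_mor: "f \<in> mor A \<Longrightarrow> snd K (snd F f) = f"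
    and FK_obj: "u \<in> c_obj B \<Longrightarrow> fst F (fst K u) = u"
    and FK_mor: "g \<in> mor B \<Longrightarrow> snd F (snd K g) = g"
begin

lemma FK_hom: "\<lbrakk>u \<in> c_obj B; v \<in> c_obj B; g \<in> c_hom B u v\<rbrakk> \<Longrightarrow> snd F (snd K g) = g"
  by (metis FK_mor mor_iff)

lemma obj_cases:
  assumes "x \<in> c_obj A"
  obtains u where "u \<in> c_obj B" "x = fst K u"
proof
  show "fst F x \<in> c_obj B" "x = fst K (fst F x)"
    using assms by (simp_all add: F_obj KF_obj)
qed

lemma hom_cases:
  assumes uv: "u \<in> c_obj B" "v \<in> c_obj B" and f: "f \<in> c_hom A (fst K u) (fst K v)"
  obtains g where "g \<in> c_hom B u v" "f = snd K g"
proof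
  show "snd F f \<in> c_hom B u v"
    using F_hom[OF K.obj K.obj f] uv by (simp add: FK_obj)
  have "f \<in> mor A"
    using K.obj uv f unfolding mor_iff by blast
  then show "f = snd K (snd F f)"
    by (simp add: KF_mor)
qed

lemma A_mcat_basic: "mcat_basic A"
proof
  show "m_unit A \<in> c_obj A"
    using K.obj[OF B.unit_obj] by (simp add: K.preserves_unit)
next
  fix x y assume x: "x \<in> c_obj A" and y: "y \<in> c_obj A"
  obtain u where u: "u \<in> c_obj B" "x = fst K u" using obj_cases[OF x] .
  obtain v where v: "v \<in> c_obj B" "y = fst K v" using obj_cases[OF y] .
  show "m_tens A x y \<in> c_obj A"
    using u v by (simp add: K.obj B.tens_obj flip: K.preserves_tens)
  have "m_tensm A (c_id A x) (c_id A y) = snd K (m_tensm B (c_id B u) (c_id B v))"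
    using u v by (simp add: B.id_hom K.preserves_tensm K.preserves_id)
  also have "\<dots> = c_id A (m_tens A x y)"
    using u v by (simp add: B.tens_obj B.tensm_id K.preserves_id K.preserves_tens)
  finally show "m_tensm A (c_id A x) (c_id A y) = c_id A (m_tens A x y)" .
next
  fix x assume x: "x \<in> c_obj A"
  obtain u where u: "u \<in> c_obj B" "x = fst K u" using obj_cases[OF x] .
  show "c_id A x \<in> c_hom A x x"
    using K.hom[OF u(1) u(1) B.id_hom[OF u(1)]] u by (simp add: K.preserves_id)
  show "m_lu A x \<in> c_hom A (m_tens A (m_unit A) x) x"
    using K.hom[OF _ u(1) B.lu_hom[OF u(1)]] u
    by (simp add: B.tens_obj B.unit_obj K.preserves_lu K.preserves_tens K.preserves_unit)
  show "m_ru A x \<in> c_hom A (m_tens A x (m_unit A)) x"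
    using K.hom[OF _ u(1) B.ru_hom[OF u(1)]] u
    by (simp add: B.tens_obj B.unit_obj K.preserves_ru K.preserves_tens K.preserves_unit)
next
  fix x y z assume x: "x \<in> c_obj A" and y: "y \<in> c_obj A" and z: "z \<in> c_obj A"
  obtain u where u: "u \<in> c_obj B" "x = fst K u" using obj_cases[OF x] .
  obtain v where v: "v \<in> c_obj B" "y = fst K v" using obj_cases[OF y] .
  obtain w where w: "w \<in> c_obj B" "z = fst K w" using obj_cases[OF z] .
  show "m_assoc A x y z \<in> c_hom A (m_tens A x (m_tens A y z)) (m_tens A (m_tens A x y) z)"
    using K.hom[OF _ _ B.assoc_hom[OF u(1) v(1) w(1)]] u v w
    by (simp add: B.tens_obj K.preserves_assoc K.preserves_tens)
  fix f g assume "f \<in> c_hom A x y" and "g \<in> c_hom A y z"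
  then obtain f' g' where f: "f' \<in> c_hom B u v" "f = snd K f'" and g: "g' \<in> c_hom B v w" "g = snd K g'"
    using hom_cases u v w by metis
  show "c_comp A g f \<in> c_hom A x z"
    using K.hom[OF u(1) w(1) B.comp_hom[OF u(1) v(1) w(1) f(1) g(1)]] u v w f g
    by (simp add: K.preserves_comp)
next
  fix x y f assume x: "x \<in> c_obj A" and y: "y \<in> c_obj A" and "f \<in> c_hom A x y"
  obtain u where u: "u \<in> c_obj B" "x = fst K u" using obj_cases[OF x] .
  obtain v where v: "v \<in> c_obj B" "y = fst K v" using obj_cases[OF y] .
  obtain f' where f: "f' \<in> c_hom B u v" "f = snd K f'"
    using hom_cases u v \<open>f \<in> _\<close> by metis
  have "c_comp A (c_id A y) f = snd K (c_comp B (c_id B v) f')"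
    using u v f by (simp add: B.id_hom K.preserves_comp K.preserves_id)
  then show "c_comp A (c_id A y) f = f"
    using u v f by (simp add: B.id_left)
  have "c_comp A f (c_id A x) = snd K (c_comp B f' (c_id B u))"
    using u v f by (simp add: B.id_hom K.preserves_comp K.preserves_id)
  then show "c_comp A f (c_id A x) = f"
    using u v f by (simp add: B.id_right)
next
  fix x x' y y' f g
  assume x: "x \<in> c_obj A" and x': "x' \<in> c_obj A" and y: "y \<in> c_obj A" and y': "y' \<in> c_obj A"
    and "f \<in> c_hom A x x'" and "g \<in> c_hom A y y'"
  obtain u where u: "u \<in> c_obj B" "x = fst K u" using obj_cases[OF x] .
  obtain u' where u': "u' \<in> c_obj B" "x' = fst K u'" using obj_cases[OF x'] .
  obtain v where v: "v \<in> c_obj B" "y = fst K v" using obj_cases[OF y] .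
  obtain v' where v': "v' \<in> c_obj B" "y' = fst K v'" using obj_cases[OF y'] .
  obtain f' g' where f: "f' \<in> c_hom B u u'" "f = snd K f'" and g: "g' \<in> c_hom B v v'" "g = snd K g'"
    using hom_cases u u' v v' \<open>f \<in> _\<close> \<open>g \<in> _\<close> by metis
  show "m_tensm A f g \<in> c_hom A (m_tens A x y) (m_tens A x' y')"
    using K.hom[OF _ _ B.tensm_hom[OF u(1) u'(1) v(1) v'(1) f(1) g(1)]] u u' v v' f g
    by (simp add: B.tens_obj K.preserves_tens K.preserves_tensm)
qed

lemma inverse_strict_monoidal: "strict_monoidal_functor A B F"
proof
  show "is_functor A B F"
  proof (rule is_functorI)
    fix x y z f g
    assume x: "x \<in> c_obj A" and y: "y \<in> c_obj A" and z: "z \<in> c_obj A"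
      and "f \<in> c_hom A x y" and "g \<in> c_hom A y z"
    obtain u where u: "u \<in> c_obj B" "x = fst K u" using obj_cases[OF x] .
    obtain v where v: "v \<in> c_obj B" "y = fst K v" using obj_cases[OF y] .
    obtain w where w: "w \<in> c_obj B" "z = fst K w" using obj_cases[OF z] .
    obtain f' g' where f: "f' \<in> c_hom B u v" "f = snd K f'" and g: "g' \<in> c_hom B v w" "g = snd K g'"
      using hom_cases u v w \<open>f \<in> _\<close> \<open>g \<in> _\<close> by metis
    show "snd F (c_comp A g f) = c_comp B (snd F g) (snd F f)"
      using u v w f g B.comp_hom[OF u(1) v(1) w(1) f(1) g(1)]
      by (simp add: FK_hom flip: K.preserves_comp)
  next
    fix x assume x: "x \<in> c_obj A"
    obtain u where u: "u \<in> c_obj B" "x = fst K u" using obj_cases[OF x] .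
    show "snd F (c_id A x) = c_id B (fst F x)"
      using u B.id_hom[OF u(1)] by (simp add: FK_hom FK_obj flip: K.preserves_id)
  qed (use F_obj F_hom in blast)+
next
  fix x y assume x: "x \<in> c_obj A" and y: "y \<in> c_obj A"
  obtain u where u: "u \<in> c_obj B" "x = fst K u" using obj_cases[OF x] .
  obtain v where v: "v \<in> c_obj B" "y = fst K v" using obj_cases[OF y] .
  show "fst F (m_tens A x y) = m_tens B (fst F x) (fst F y)"
    using u v by (simp add: B.tens_obj FK_obj flip: K.preserves_tens)
next
  fix x x' y y' f g
  assume x: "x \<in> c_obj A" and x': "x' \<in> c_obj A" and y: "y \<in> c_obj A" and y': "y' \<in> c_obj A"
    and "f \<in> c_hom A x x'" and "g \<in> c_hom A y y'"
  obtain u where u: "u \<in> c_obj B" "x = fst K u" using obj_cases[OF x] .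
  obtain u' where u': "u' \<in> c_obj B" "x' = fst K u'" using obj_cases[OF x'] .
  obtain v where v: "v \<in> c_obj B" "y = fst K v" using obj_cases[OF y] .
  obtain v' where v': "v' \<in> c_obj B" "y' = fst K v'" using obj_cases[OF y'] .
  obtain f' g' where f: "f' \<in> c_hom B u u'" "f = snd K f'" and g: "g' \<in> c_hom B v v'" "g = snd K g'"
    using hom_cases u u' v v' \<open>f \<in> _\<close> \<open>g \<in> _\<close> by metis
  show "snd F (m_tensm A f g) = m_tensm B (snd F f) (snd F g)"
    using u u' v v' f g FK_hom[OF _ _ B.tensm_hom[OF u(1) u'(1) v(1) v'(1) f(1) g(1)]]
    by (simp add: B.tens_obj FK_hom flip: K.preserves_tensm)
next
  show "fst F (m_unit A) = m_unit B"
    using FK_obj[OF B.unit_obj] by (simp add: K.preserves_unit)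
next
  fix x y z assume x: "x \<in> c_obj A" and y: "y \<in> c_obj A" and z: "z \<in> c_obj A"
  obtain u where u: "u \<in> c_obj B" "x = fst K u" using obj_cases[OF x] .
  obtain v where v: "v \<in> c_obj B" "y = fst K v" using obj_cases[OF y] .
  obtain w where w: "w \<in> c_obj B" "z = fst K w" using obj_cases[OF z] .
  show "snd F (m_assoc A x y z) = m_assoc B (fst F x) (fst F y) (fst F z)"
    using u v w FK_hom[OF _ _ B.assoc_hom[OF u(1) v(1) w(1)]]
    by (simp add: B.tens_obj FK_obj flip: K.preserves_assoc)
next
  fix x assume x: "x \<in> c_obj A"
  obtain u where u: "u \<in> c_obj B" "x = fst K u" using obj_cases[OF x] .
  show "snd F (m_lu A x) = m_lu B (fst F x)"
    using u FK_hom[OF _ _ B.lu_hom[OF u(1)]]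
    by (simp add: B.tens_obj B.unit_obj FK_obj flip: K.preserves_lu)
  show "snd F (m_ru A x) = m_ru B (fst F x)"
    using u FK_hom[OF _ _ B.ru_hom[OF u(1)]]
    by (simp add: B.tens_obj B.unit_obj FK_obj flip: K.preserves_ru)
qed

lemma two_group_iso: "two_group_iso A B"
proof -
  interpret F: strict_monoidal_functor A B F by (rule inverse_strict_monoidal)
  show ?thesis
    unfolding two_group_iso_def
    using F.monoidal_functor[OF A_mcat_basic] K.monoidal_functor[OF B.mcat_basic_axioms]
      KF_obj KF_mor FK_obj FK_mor by blast
qed

end

section \<open>The 2-group of self-equivalences of a group\<close>

lemma Sym_2grp_obj: "c_obj (Sym_2grp C) = {F. is_equivalence C C F \<and> ext_functor C F}"
  by (simp add: Sym_2grp_def Let_def)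

lemma Sym_2grp_hom:
  "c_hom (Sym_2grp C) F F' = (if F \<in> c_obj (Sym_2grp C) \<and> F' \<in> c_obj (Sym_2grp C)
      then {(F, F', \<alpha>) | \<alpha>. nat_iso C C F F' \<alpha> \<and> \<alpha> \<in> extensional (c_obj C)} else {})"
  by (simp add: Sym_2grp_def Let_def)

lemma Sym_2grp_simps:
  "c_comp (Sym_2grp C) g f = (fst f, fst (snd g), \<lambda>x\<in>c_obj C. c_comp C (snd (snd g) x) (snd (snd f) x))"
  "c_id (Sym_2grp C) F = (F, F, \<lambda>x\<in>c_obj C. c_id C (fst F x))"
  "m_tens (Sym_2grp C) = fcomp_r C"
  "m_tensm (Sym_2grp C) f g = (fcomp_r C (fst f) (fst g), fcomp_r C (fst (snd f)) (fst (snd g)),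
      \<lambda>x\<in>c_obj C. c_comp C (snd (snd f) (fst (fst (snd g)) x)) (snd (fst f) (snd (snd g) x)))"
  "m_unit (Sym_2grp C) = (\<lambda>x\<in>c_obj C. x, \<lambda>f\<in>mor C. f)"
  "m_assoc (Sym_2grp C) F G H = (fcomp_r C F (fcomp_r C G H), fcomp_r C (fcomp_r C F G) H,
      \<lambda>x\<in>c_obj C. c_id C (fst F (fst G (fst H x))))"
  "m_lu (Sym_2grp C) F = (fcomp_r C (m_unit (Sym_2grp C)) F, F, \<lambda>x\<in>c_obj C. c_id C (fst F x))"
  "m_ru (Sym_2grp C) F = (fcomp_r C F (m_unit (Sym_2grp C)), F, \<lambda>x\<in>c_obj C. c_id C (fst F x))"
  by (simp_all add: Sym_2grp_def Let_def split: prod.split)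

lemma grp_cat_simps [simp]:
  "c_obj (grp_cat H) = {()}"
  "c_hom (grp_cat H) x y = carrier H"
  "c_comp (grp_cat H) g h = g \<otimes>\<^bsub>H\<^esub> h"
  "c_id (grp_cat H) x = \<one>\<^bsub>H\<^esub>"
  "mor (grp_cat H) = carrier H"
  by (simp_all add: grp_cat_def mor_def)

lemma restrict_unit [simp]: "restrict f ({()} :: unit set) = f"
  by (rule ext) simp

text \<open>Natural transformations between endofunctors \<open>\<phi>\<close>, \<open>\<psi>\<close> of a group, viewed as a
  one-object groupoid, are the elements \<open>a\<close> with \<open>\<psi> = a \<phi> a\<inverse>\<close>.\<close>

definition intertwines :: "('g, 'b) monoid_scheme \<Rightarrow> 'g \<Rightarrow> ('g \<Rightarrow> 'g) \<Rightarrow> ('g \<Rightarrow> 'g) \<Rightarrow> bool" where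
  "intertwines H a \<phi> \<psi> \<longleftrightarrow> a \<in> carrier H \<and> (\<forall>g\<in>carrier H. a \<otimes>\<^bsub>H\<^esub> \<phi> g = \<psi> g \<otimes>\<^bsub>H\<^esub> a)"

context group
begin

lemma intertwines_one:
  assumes "\<phi> \<in> carrier G \<rightarrow> carrier G" and "\<And>g. g \<in> carrier G \<Longrightarrow> \<phi> g = \<psi> g"
  shows "intertwines G \<one> \<phi> \<psi>"
  using assms unfolding intertwines_def by (metis funcset_mem one_closed l_one r_one)

lemma intertwines_mult:
  assumes "intertwines G a \<phi> \<psi>" "intertwines G b \<psi> \<chi>"
    and "\<phi> \<in> carrier G \<rightarrow> carrier G" "\<psi> \<in> carrier G \<rightarrow> carrier G" "\<chi> \<in> carrier G \<rightarrow> carrier G"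
  shows "intertwines G (b \<otimes> a) \<phi> \<chi>"
  unfolding intertwines_def
proof (intro conjI ballI)
  show "b \<otimes> a \<in> carrier G"
    using assms(1,2) by (simp add: intertwines_def)
  fix g assume g: "g \<in> carrier G"
  with assms have "b \<otimes> a \<otimes> \<phi> g = b \<otimes> (\<psi> g \<otimes> a)"
    by (auto simp: intertwines_def m_assoc funcset_mem)
  also have "\<dots> = \<chi> g \<otimes> (b \<otimes> a)"
    using assms g by (auto simp: intertwines_def funcset_mem simp flip: m_assoc)
  finally show "b \<otimes> a \<otimes> \<phi> g = \<chi> g \<otimes> (b \<otimes> a)" .
qed

lemma intertwines_compose:
  assumes a: "intertwines G a \<phi> \<phi>'" and b: "intertwines G b \<psi> \<psi>'"
    and \<phi>: "\<phi> \<in> hom G G" and "\<phi>' \<in> carrier G \<rightarrow> carrier G"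
    and "\<psi> \<in> carrier G \<rightarrow> carrier G" "\<psi>' \<in> carrier G \<rightarrow> carrier G"
  shows "intertwines G (a \<otimes> \<phi> b) (\<lambda>g. \<phi> (\<psi> g)) (\<lambda>g. \<phi>' (\<psi>' g))"
  unfolding intertwines_def
proof (intro conjI ballI)
  have c: "a \<in> carrier G" "b \<in> carrier G"
    using a b by (simp_all add: intertwines_def)
  then show "a \<otimes> \<phi> b \<in> carrier G"
    using \<phi> by (simp add: hom_in_carrier)
  fix g assume g: "g \<in> carrier G"
  have cs: "\<phi> b \<in> carrier G" "\<psi> g \<in> carrier G" "\<psi>' g \<in> carrier G" "\<phi> (\<psi>' g) \<in> carrier G"
    "\<phi>' (\<psi>' g) \<in> carrier G" "\<phi> (\<psi> g) \<in> carrier G"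
    using assms c g by (auto simp: hom_in_carrier funcset_mem)
  have "a \<otimes> \<phi> b \<otimes> \<phi> (\<psi> g) = a \<otimes> \<phi> (b \<otimes> \<psi> g)"
    using \<phi> c cs by (simp add: m_assoc hom_mult)
  also have "\<dots> = a \<otimes> \<phi> (\<psi>' g) \<otimes> \<phi> b"
    using b g \<phi> c cs by (simp add: intertwines_def m_assoc hom_mult)
  also have "\<dots> = \<phi>' (\<psi>' g) \<otimes> (a \<otimes> \<phi> b)"
    using a c cs by (simp add: intertwines_def m_assoc)
  finally show "a \<otimes> \<phi> b \<otimes> \<phi> (\<psi> g) = \<phi>' (\<psi>' g) \<otimes> (a \<otimes> \<phi> b)" .
qed

end

lemma bij_betw_if_inverse_up_to_conjugation:
  assumes G: "group G" and H: "group H"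
    and \<phi>: "\<phi> \<in> carrier G \<rightarrow> carrier H" and \<psi>: "\<psi> \<in> carrier H \<rightarrow> carrier G"
    and a: "intertwines G a (\<lambda>g. g) (\<lambda>g. \<psi> (\<phi> g))"
    and b: "intertwines H b (\<lambda>h. \<phi> (\<psi> h)) (\<lambda>h. h)"
  shows "bij_betw \<phi> (carrier G) (carrier H)"
proof -
  interpret G: group G by (rule G)
  interpret H: group H by (rule H)
  have a_carrier: "a \<in> carrier G"
    using a by (simp add: intertwines_def)
  have "inj_on \<phi> (carrier G)"
  proof (rule inj_onI)
    fix g g' assume g: "g \<in> carrier G" and g': "g' \<in> carrier G" and "\<phi> g = \<phi> g'"
    then have "a \<otimes>\<^bsub>G\<^esub> g = a \<otimes>\<^bsub>G\<^esub> g'"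
      using a unfolding intertwines_def by metis
    then show "g = g'"
      using a_carrier g g' by simp
  qed
  moreover have "h \<in> \<phi> ` carrier G" if h: "h \<in> carrier H" for h
  proof -
    have b_carrier: "b \<in> carrier H"
      using b by (simp add: intertwines_def)
    define h' where "h' = b \<otimes>\<^bsub>H\<^esub> h \<otimes>\<^bsub>H\<^esub> inv\<^bsub>H\<^esub> b"
    have h': "h' \<in> carrier H" "\<psi> h' \<in> carrier G" "\<phi> (\<psi> h') \<in> carrier H"
      using b_carrier h \<phi> \<psi> unfolding h'_def by (auto intro: funcset_mem)
    have "b \<otimes>\<^bsub>H\<^esub> \<phi> (\<psi> h') = h' \<otimes>\<^bsub>H\<^esub> b"
      using b h'(1) unfolding intertwines_def by blast
    also have "\<dots> = b \<otimes>\<^bsub>H\<^esub> h"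
      using b_carrier h unfolding h'_def by (simp add: H.m_assoc)
    finally have "\<phi> (\<psi> h') = h"
      using b_carrier h h'(3) by simp
    then show ?thesis
      using h'(2) by (rule image_eqI[OF sym])
  qed
  ultimately show ?thesis
    using \<phi> unfolding bij_betw_def by (auto intro: funcset_mem)
qed

lemma hom_funcset: "h \<in> hom G H \<Longrightarrow> h \<in> carrier G \<rightarrow> carrier H"
  by (simp add: hom_def)

lemma auto_funcset: "\<phi> \<in> auto H \<Longrightarrow> \<phi> \<in> carrier H \<rightarrow> carrier H"
  by (simp add: auto_def hom_def)

lemma restrict_iso_in_auto:
  assumes "group H" "\<phi> \<in> iso H H"
  shows "restrict \<phi> (carrier H) \<in> auto H"
  using assms group.is_monoid[OF assms(1)]
  by (auto simp: auto_def Bij_def iso_def hom_def bij_betw_def inj_on_def monoid.m_closed)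

lemma auto_compose:
  assumes "group H" "\<phi> \<in> auto H" "\<psi> \<in> auto H"
  shows "(\<lambda>g\<in>carrier H. \<phi> (\<psi> g)) \<in> auto H"
  using subgroup.m_closed[OF group.subgroup_auto[OF assms(1)] assms(2,3)] assms(2,3)
  by (simp add: BijGroup_def auto_def compose_def)

lemma grp_cat_functor_iff:
  assumes "group H"
  shows "is_functor (grp_cat H) (grp_cat H) F \<longleftrightarrow> snd F \<in> hom H H"
  using hom_one[OF _ assms assms] unfolding is_functor_def hom_def by auto

lemma fcomp_r_grp_cat:
  "fcomp_r (grp_cat H) F F' = (\<lambda>x. fst F (fst F' x), \<lambda>f\<in>carrier H. snd F (snd F' f))"
  by (simp add: fcomp_r_def)

lemma Sym_grp_obj_iff:
  assumes H: "group H"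
  shows "F \<in> c_obj (Sym_2grp (grp_cat H)) \<longleftrightarrow> snd F \<in> auto H"
proof
  assume "F \<in> c_obj (Sym_2grp (grp_cat H))"
  then obtain Q \<eta> \<epsilon> where F: "is_functor (grp_cat H) (grp_cat H) F"
    and Q: "is_functor (grp_cat H) (grp_cat H) Q"
    and \<eta>: "nat_iso (grp_cat H) (grp_cat H) (id, id) (fcomp Q F) \<eta>"
    and \<epsilon>: "nat_iso (grp_cat H) (grp_cat H) (fcomp F Q) (id, id) \<epsilon>"
    and ext: "ext_functor (grp_cat H) F"
    by (auto simp: Sym_2grp_obj is_equivalence_def)
  have hom: "snd F \<in> hom H H" "snd Q \<in> hom H H"
    using F Q by (simp_all add: grp_cat_functor_iff H)
  have "intertwines H (\<eta> ()) (\<lambda>g. g) (\<lambda>g. snd Q (snd F g))"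
    using \<eta> unfolding nat_iso_def nat_trans_def intertwines_def fcomp_def by auto
  moreover have "intertwines H (\<epsilon> ()) (\<lambda>g. snd F (snd Q g)) (\<lambda>g. g)"
    using \<epsilon> unfolding nat_iso_def nat_trans_def intertwines_def fcomp_def by auto
  ultimately have "bij_betw (snd F) (carrier H) (carrier H)"
    by (rule bij_betw_if_inverse_up_to_conjugation[OF H H hom_funcset[OF hom(1)] hom_funcset[OF hom(2)]])
  then show "snd F \<in> auto H"
    using hom ext by (simp add: auto_def Bij_def ext_functor_def)
next
  assume "snd F \<in> auto H"
  then have iso: "snd F \<in> iso H H" and bij: "bij_betw (snd F) (carrier H) (carrier H)"
    and ext: "snd F \<in> extensional (carrier H)"
    by (simp_all add: auto_def Bij_def iso_def)
  let ?Q = "(fst F, inv_into (carrier H) (snd F))"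
  have "is_functor (grp_cat H) (grp_cat H) F" "is_functor (grp_cat H) (grp_cat H) ?Q"
    using iso group.iso_set_sym[OF H iso] by (simp_all add: grp_cat_functor_iff H iso_def)
  then have "is_equivalence (grp_cat H) (grp_cat H) F"
    by (rule is_equivalence_if_inverse)
      (use bij in \<open>simp_all add: bij_betw_inv_into_left bij_betw_inv_into_right group.is_monoid[OF H]\<close>)
  moreover have "ext_functor (grp_cat H) F"
    using ext by (simp add: ext_functor_def extensional_def)
  ultimately show "F \<in> c_obj (Sym_2grp (grp_cat H))"
    by (simp add: Sym_2grp_obj)
qed

lemma Sym_grp_hom_iff:
  assumes H: "group H"
    and x: "x \<in> c_obj (Sym_2grp (grp_cat H))" and x': "x' \<in> c_obj (Sym_2grp (grp_cat H))"
  shows "m \<in> c_hom (Sym_2grp (grp_cat H)) x x' \<longleftrightarrow>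
    fst m = x \<and> fst (snd m) = x' \<and> intertwines H (snd (snd m) ()) (snd x) (snd x')"
proof -
  interpret group H by (rule H)
  have "nat_iso (grp_cat H) (grp_cat H) x x' \<alpha> \<longleftrightarrow> intertwines H (\<alpha> ()) (snd x) (snd x')" for \<alpha>
    unfolding nat_iso_def nat_trans_def is_iso_in_def intertwines_def
    by (auto intro!: bexI[of _ "inv\<^bsub>H\<^esub> (\<alpha> ())"])
  moreover have "\<alpha> \<in> extensional (c_obj (grp_cat H))" for \<alpha> :: "unit \<Rightarrow> 'a"
    by (simp add: extensional_def)
  ultimately show ?thesis
    using x x' by (cases m) (auto simp: Sym_2grp_hom)
qed

lemma Sym_grp_tens_apply:
  "g \<in> carrier H \<Longrightarrow> snd (m_tens (Sym_2grp (grp_cat H)) x y) g = snd x (snd y g)"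
  "g \<in> carrier H \<Longrightarrow> snd (m_unit (Sym_2grp (grp_cat H))) g = g"
  by (simp_all add: Sym_2grp_simps fcomp_r_grp_cat)

lemma Sym_grp_tens_obj:
  assumes "group H"
    and "x \<in> c_obj (Sym_2grp (grp_cat H))" "y \<in> c_obj (Sym_2grp (grp_cat H))"
  shows "m_tens (Sym_2grp (grp_cat H)) x y \<in> c_obj (Sym_2grp (grp_cat H))"
  using assms auto_compose[OF assms(1)] by (simp add: Sym_grp_obj_iff Sym_2grp_simps fcomp_r_grp_cat)

lemma Sym_grp_unit_obj: "group H \<Longrightarrow> m_unit (Sym_2grp (grp_cat H)) \<in> c_obj (Sym_2grp (grp_cat H))"
  by (simp add: Sym_grp_obj_iff Sym_2grp_simps group.id_in_auto)

lemma mcat_basic_Sym_grp: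
  fixes H :: "'g monoid" (structure)
  assumes H: "group H"
  shows "mcat_basic (Sym_2grp (grp_cat H))"
proof -
  interpret group H by (rule H)
  let ?S = "Sym_2grp (grp_cat H)"
  note obj_iff = Sym_grp_obj_iff[OF H] and hom_iff = Sym_grp_hom_iff[OF H]
  have funcset: "snd x \<in> carrier H \<rightarrow> carrier H" if "x \<in> c_obj ?S" for x
    using that by (simp add: obj_iff auto_funcset)
  have app_carrier: "snd x g \<in> carrier H" if "x \<in> c_obj ?S" "g \<in> carrier H" for x g
    using funcset[OF that(1)] that(2) by (rule funcset_mem)
  have hom: "snd x \<in> hom H H" if "x \<in> c_obj ?S" for x
    using that by (simp add: obj_iff auto_def)
  note tens_obj = Sym_grp_tens_obj[OF H] and unit_obj = Sym_grp_unit_obj[OF H]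
  have tens_funcset: "snd (m_tens ?S x y) \<in> carrier H \<rightarrow> carrier H"
    if "x \<in> c_obj ?S" "y \<in> c_obj ?S" for x y
    by (rule funcset[OF tens_obj[OF that]])
  show ?thesis
  proof
    fix x y z assume x: "x \<in> c_obj ?S" and y: "y \<in> c_obj ?S" and z: "z \<in> c_obj ?S"
    have "intertwines H \<one> (snd (m_tens ?S x (m_tens ?S y z))) (snd (m_tens ?S (m_tens ?S x y) z))"
      by (intro intertwines_one tens_funcset x tens_obj y z) (simp add: Sym_grp_tens_apply app_carrier y z)
    then show "m_assoc ?S x y z \<in> c_hom ?S (m_tens ?S x (m_tens ?S y z)) (m_tens ?S (m_tens ?S x y) z)"
      using x y z by (simp add: hom_iff tens_obj) (simp add: Sym_2grp_simps)
    fix f g assume f: "f \<in> c_hom ?S x y" and g: "g \<in> c_hom ?S y z"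
    then have "intertwines H (snd (snd g) () \<otimes> snd (snd f) ()) (snd x) (snd z)"
      using x y z by (intro intertwines_mult[OF _ _ funcset[OF x] funcset[OF y] funcset[OF z]])
        (simp_all add: hom_iff)
    then show "c_comp ?S g f \<in> c_hom ?S x z"
      using f g x y z by (simp add: hom_iff) (simp add: Sym_2grp_simps)
  next
    fix x y f assume x: "x \<in> c_obj ?S" and y: "y \<in> c_obj ?S" and f: "f \<in> c_hom ?S x y"
    then have "snd (snd f) () \<in> carrier H"
      by (simp add: hom_iff intertwines_def)
    then have "(\<lambda>u. \<one> \<otimes> snd (snd f) u) = snd (snd f)" "(\<lambda>u. snd (snd f) u \<otimes> \<one>) = snd (snd f)"
      by (simp_all add: fun_eq_iff)
    then show "c_comp ?S (c_id ?S y) f = f" "c_comp ?S f (c_id ?S x) = f"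
      using f x y by (simp_all add: hom_iff Sym_2grp_simps prod_eq_iff)
  next
    fix x y assume x: "x \<in> c_obj ?S" and y: "y \<in> c_obj ?S"
    show "m_tensm ?S (c_id ?S x) (c_id ?S y) = c_id ?S (m_tens ?S x y)"
      using hom_one[OF hom[OF x] H H] by (simp add: Sym_2grp_simps fcomp_r_grp_cat)
  next
    fix x x' y y' f g
    assume x: "x \<in> c_obj ?S" and x': "x' \<in> c_obj ?S" and y: "y \<in> c_obj ?S" and y': "y' \<in> c_obj ?S"
      and f: "f \<in> c_hom ?S x x'" and g: "g \<in> c_hom ?S y y'"
    have "intertwines H (snd (snd f) () \<otimes> snd x (snd (snd g) ()))
        (\<lambda>h. snd x (snd y h)) (\<lambda>h. snd x' (snd y' h))"
      using f g x x' y y'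
      by (intro intertwines_compose[OF _ _ hom[OF x] funcset[OF x'] funcset[OF y] funcset[OF y']])
        (simp_all add: hom_iff)
    then have "intertwines H (snd (snd f) () \<otimes> snd x (snd (snd g) ()))
        (snd (m_tens ?S x y)) (snd (m_tens ?S x' y'))"
      unfolding intertwines_def by (simp add: Sym_grp_tens_apply)
    then show "m_tensm ?S f g \<in> c_hom ?S (m_tens ?S x y) (m_tens ?S x' y')"
      using f g x x' y y' by (simp add: hom_iff tens_obj) (simp add: Sym_2grp_simps)
  next
    fix x assume x: "x \<in> c_obj ?S"
    have "intertwines H \<one> (snd x) (snd x)"
      by (rule intertwines_one[OF funcset[OF x]]) simp
    then show "c_id ?S x \<in> c_hom ?S x x"
      using x by (simp add: hom_iff Sym_2grp_simps)
    have "intertwines H \<one> (snd (m_tens ?S (m_unit ?S) x)) (snd x)"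
      by (intro intertwines_one tens_funcset unit_obj x) (simp add: Sym_grp_tens_apply app_carrier x)
    then show "m_lu ?S x \<in> c_hom ?S (m_tens ?S (m_unit ?S) x) x"
      using x by (simp add: hom_iff tens_obj unit_obj) (simp add: Sym_2grp_simps)
    have "intertwines H \<one> (snd (m_tens ?S x (m_unit ?S))) (snd x)"
      by (rule intertwines_one[OF tens_funcset[OF x unit_obj]]) (simp add: Sym_grp_tens_apply app_carrier x)
    then show "m_ru ?S x \<in> c_hom ?S (m_tens ?S x (m_unit ?S)) x"
      using x by (simp add: hom_iff tens_obj unit_obj) (simp add: Sym_2grp_simps)
  qed (rule unit_obj, rule tens_obj)
qed

section \<open>Wreath 2-products and products\<close>

text \<open>Membership in \<open>{1..n}\<close> is kept atomic, so that facts \<open>\<sigma> k \<in> {1..n}\<close> about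
  permutations apply by rewriting.\<close>

declare atLeastAtMost_iff [simp del] One_nat_def [simp del]

lemma wreath_obj_iff:
  "p \<in> c_obj (wreath n M) \<longleftrightarrow>
    fst p permutes {1..n} \<and> snd p \<in> extensional {1..n} \<and> (\<forall>k\<in>{1..n}. snd p k \<in> c_obj M)"
  by (cases p) (simp add: wreath_def Let_def)

lemma wreath_hom_iff:
  assumes "p \<in> c_obj (wreath n M)" "q \<in> c_obj (wreath n M)"
  shows "m \<in> c_hom (wreath n M) p q \<longleftrightarrow> fst m = fst p \<and> fst q = fst p \<and>
    snd m \<in> extensional {1..n} \<and> (\<forall>k\<in>{1..n}. snd m k \<in> c_hom M (snd p k) (snd q k))"
  using assms by (cases p, cases q, cases m) (auto simp: wreath_def Let_def)

lemma wreath_simps: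
  "c_comp (wreath n M) g f = (fst g, \<lambda>k\<in>{1..n}. c_comp M (snd g k) (snd f k))"
  "c_id (wreath n M) p = (fst p, \<lambda>k\<in>{1..n}. c_id M (snd p k))"
  "m_tens (wreath n M) p q = (fst p \<circ> fst q, \<lambda>k\<in>{1..n}. m_tens M (snd p (fst q k)) (snd q k))"
  "m_tensm (wreath n M) f g = (fst f \<circ> fst g, \<lambda>k\<in>{1..n}. m_tensm M (snd f (fst g k)) (snd g k))"
  "m_unit (wreath n M) = (id, \<lambda>k\<in>{1..n}. m_unit M)"
  "m_assoc (wreath n M) p q r = (fst p \<circ> fst q \<circ> fst r,
      \<lambda>k\<in>{1..n}. m_assoc M (snd p (fst q (fst r k))) (snd q (fst r k)) (snd r k))"
  "m_lu (wreath n M) p = (fst p, \<lambda>k\<in>{1..n}. m_lu M (snd p k))"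
  "m_ru (wreath n M) p = (fst p, \<lambda>k\<in>{1..n}. m_ru M (snd p k))"
  by (simp_all add: wreath_def Let_def split: prod.split)

lemma wreath_objD:
  assumes "p \<in> c_obj (wreath n M)" "k \<in> {1..n}"
  shows "fst p k \<in> {1..n}" "snd p k \<in> c_obj M"
  using assms permutes_in_image[of "fst p" "{1..n}" k] by (simp_all add: wreath_obj_iff)

lemma wreath_homI:
  assumes "p \<in> c_obj (wreath n M)" "q \<in> c_obj (wreath n M)" "fst m = fst p" "fst q = fst p"
    and "snd m \<in> extensional {1..n}" "\<And>k. k \<in> {1..n} \<Longrightarrow> snd m k \<in> c_hom M (snd p k) (snd q k)"
  shows "m \<in> c_hom (wreath n M) p q"
  using assms by (simp add: wreath_hom_iff)

lemma wreath_homD: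
  assumes "m \<in> c_hom (wreath n M) p q" "p \<in> c_obj (wreath n M)" "q \<in> c_obj (wreath n M)"
  shows "fst m = fst p" "fst q = fst p" "snd m \<in> extensional {1..n}"
    "k \<in> {1..n} \<Longrightarrow> snd m k \<in> c_hom M (snd p k) (snd q k)"
  using assms by (simp_all add: wreath_hom_iff)

lemma mcat_basic_wreath:
  assumes "mcat_basic M"
  shows "mcat_basic (wreath n M)"
proof -
  interpret M: mcat_basic M by fact
  let ?W = "wreath n M"
  have perm_in: "fst p k \<in> {1..n}" and comp_obj: "snd p k \<in> c_obj M"
    if "p \<in> c_obj ?W" "k \<in> {1..n}" for p k
    using wreath_objD[OF that] by simp_all
  note simps = wreath_simps perm_in comp_obj
  have tens_obj: "m_tens ?W p q \<in> c_obj ?W" if "p \<in> c_obj ?W" "q \<in> c_obj ?W" for p q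
    using that M.tens_obj[OF wreath_objD(2)[OF that(1) wreath_objD(1)[OF that(2)]] wreath_objD(2)[OF that(2)]]
    unfolding wreath_obj_iff[of "m_tens ?W p q"]
    by (simp add: permutes_compose wreath_obj_iff wreath_simps)
  have unit_obj: "m_unit ?W \<in> c_obj ?W"
    by (simp add: wreath_obj_iff wreath_simps permutes_id M.unit_obj)
  show ?thesis
  proof
    fix p q r assume p: "p \<in> c_obj ?W" and q: "q \<in> c_obj ?W" and r: "r \<in> c_obj ?W"
    show "m_assoc ?W p q r \<in> c_hom ?W (m_tens ?W p (m_tens ?W q r)) (m_tens ?W (m_tens ?W p q) r)"
      using p q r
      by (intro wreath_homI tens_obj)
        (simp_all add: simps o_assoc M.tens_obj M.assoc_hom)
    fix f g assume f: "f \<in> c_hom ?W p q" and g: "g \<in> c_hom ?W q r"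
    show "c_comp ?W g f \<in> c_hom ?W p r"
      using wreath_homD[OF f p q] wreath_homD[OF g q r] p q r
      by (intro wreath_homI) (simp_all add: simps, metis M.comp_hom wreath_objD(2))
  next
    fix p q f assume p: "p \<in> c_obj ?W" and q: "q \<in> c_obj ?W" and f: "f \<in> c_hom ?W p q"
    note f' = wreath_homD[OF f p q]
    have "c_comp M (c_id M (snd q k)) (snd f k) = snd f k"
      and "c_comp M (snd f k) (c_id M (snd p k)) = snd f k" if "k \<in> {1..n}" for k
      using f'(4)[OF that] wreath_objD(2)[OF p that] wreath_objD(2)[OF q that]
      by (simp_all add: M.id_left M.id_right)
    then show "c_comp ?W (c_id ?W q) f = f" "c_comp ?W f (c_id ?W p) = f"
      using f' by (simp_all add: wreath_simps prod_eq_iff extensional_restrict cong: restrict_cong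
         )
  next
    fix p q assume p: "p \<in> c_obj ?W" and q: "q \<in> c_obj ?W"
    then show "m_tensm ?W (c_id ?W p) (c_id ?W q) = c_id ?W (m_tens ?W p q)"
      by (simp add: simps M.tensm_id cong: restrict_cong)
  next
    fix p p' q q' f g
    assume p: "p \<in> c_obj ?W" and p': "p' \<in> c_obj ?W" and q: "q \<in> c_obj ?W" and q': "q' \<in> c_obj ?W"
      and f: "f \<in> c_hom ?W p p'" and g: "g \<in> c_hom ?W q q'"
    note f' = wreath_homD[OF f p p'] and g' = wreath_homD[OF g q q']
    show "m_tensm ?W f g \<in> c_hom ?W (m_tens ?W p q) (m_tens ?W p' q')"
    proof (rule wreath_homI[OF tens_obj[OF p q] tens_obj[OF p' q']])
      fix k assume k: "k \<in> {1..n}"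
      then have "fst q k \<in> {1..n}"
        by (rule wreath_objD(1)[OF q])
      then show "snd (m_tensm ?W f g) k \<in> c_hom M (snd (m_tens ?W p q) k) (snd (m_tens ?W p' q') k)"
        using k f'(2,4) g'(1,2,4) p p' q q'
        by (simp add: simps M.tensm_hom)
    qed (use f' g' in \<open>simp_all add: wreath_simps\<close>)
  next
    fix p assume p: "p \<in> c_obj ?W"
    then show "c_id ?W p \<in> c_hom ?W p p"
      by (intro wreath_homI) (simp_all add: simps M.id_hom)
    show "m_lu ?W p \<in> c_hom ?W (m_tens ?W (m_unit ?W) p) p"
      using p by (intro wreath_homI tens_obj unit_obj)
        (simp_all add: simps M.lu_hom)
    show "m_ru ?W p \<in> c_hom ?W (m_tens ?W p (m_unit ?W)) p"
      using p by (intro wreath_homI tens_obj unit_obj)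
        (simp_all add: simps M.ru_hom)
  qed (rule unit_obj, rule tens_obj)
qed

lemma mcat_basic_prod:
  fixes M :: "'i \<Rightarrow> ('o, 'm) mcat"
  assumes M: "\<And>i. i \<in> I \<Longrightarrow> mcat_basic (M i)"
  shows "mcat_basic (prod_mcat I M)" (is "mcat_basic ?P")
proof
  show "m_unit ?P \<in> c_obj ?P"
    by (simp add: prod_mcat_def mcat_basic.unit_obj[OF M])
  fix x y assume "x \<in> c_obj ?P" "y \<in> c_obj ?P"
  then show "m_tens ?P x y \<in> c_obj ?P"
    by (auto simp: prod_mcat_def intro!: mcat_basic.tens_obj[OF M])
next
  fix x assume "x \<in> c_obj ?P"
  then show "c_id ?P x \<in> c_hom ?P x x"
    by (auto simp: prod_mcat_def intro!: mcat_basic.id_hom[OF M])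
next
  fix x y z f g assume "x \<in> c_obj ?P" "y \<in> c_obj ?P" "z \<in> c_obj ?P"
    and "f \<in> c_hom ?P x y" "g \<in> c_hom ?P y z"
  then show "c_comp ?P g f \<in> c_hom ?P x z"
    by (auto simp: prod_mcat_def intro!: mcat_basic.comp_hom[OF M, of _ "x _" "y _" "z _"])
next
  fix x y f assume "x \<in> c_obj ?P" "y \<in> c_obj ?P" "f \<in> c_hom ?P x y"
  then show "c_comp ?P (c_id ?P y) f = f"
    by (auto simp: prod_mcat_def fun_eq_iff PiE_def extensional_def Pi_def intro: mcat_basic.id_left[OF M])
next
  fix x y f assume "x \<in> c_obj ?P" "y \<in> c_obj ?P" "f \<in> c_hom ?P x y"
  then show "c_comp ?P f (c_id ?P x) = f"
    by (auto simp: prod_mcat_def fun_eq_iff PiE_def extensional_def Pi_def intro: mcat_basic.id_right[OF M])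
next
  fix x x' y y' f g assume "x \<in> c_obj ?P" "x' \<in> c_obj ?P" "y \<in> c_obj ?P" "y' \<in> c_obj ?P"
    and "f \<in> c_hom ?P x x'" "g \<in> c_hom ?P y y'"
  then show "m_tensm ?P f g \<in> c_hom ?P (m_tens ?P x y) (m_tens ?P x' y')"
    by (auto simp: prod_mcat_def intro!: mcat_basic.tensm_hom[OF M] mcat_basic.tens_obj[OF M])
next
  fix x y assume "x \<in> c_obj ?P" "y \<in> c_obj ?P"
  then show "m_tensm ?P (c_id ?P x) (c_id ?P y) = c_id ?P (m_tens ?P x y)"
    by (auto simp: prod_mcat_def intro!: restrict_ext mcat_basic.tensm_id[OF M])
next
  fix x y z assume "x \<in> c_obj ?P" "y \<in> c_obj ?P" "z \<in> c_obj ?P"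
  then show "m_assoc ?P x y z \<in> c_hom ?P (m_tens ?P x (m_tens ?P y z)) (m_tens ?P (m_tens ?P x y) z)"
    by (auto simp: prod_mcat_def intro!: mcat_basic.assoc_hom[OF M] mcat_basic.tens_obj[OF M])
next
  fix x assume "x \<in> c_obj ?P"
  then show "m_lu ?P x \<in> c_hom ?P (m_tens ?P (m_unit ?P) x) x"
    by (auto simp: prod_mcat_def intro!: mcat_basic.lu_hom[OF M] mcat_basic.tens_obj[OF M] mcat_basic.unit_obj[OF M])
next
  fix x assume "x \<in> c_obj ?P"
  then show "m_ru ?P x \<in> c_hom ?P (m_tens ?P x (m_unit ?P)) x"
    by (auto simp: prod_mcat_def intro!: mcat_basic.ru_hom[OF M] mcat_basic.tens_obj[OF M] mcat_basic.unit_obj[OF M])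
qed

section \<open>The coproduct groupoid and its self-equivalences\<close>

lemma coprod_obj: "c_obj (coprod_cat I n G) = {(i, k). i \<in> I \<and> k \<in> {1..n i}}"
  by (simp add: coprod_cat_def Let_def)

lemma coprod_obj_iff: "(i, k) \<in> c_obj (coprod_cat I n G) \<longleftrightarrow> i \<in> I \<and> k \<in> {1..n i}"
  by (simp add: coprod_obj)

lemma coprod_hom_iff:
  "f \<in> c_hom (coprod_cat I n G) (i, k) (j, l) \<longleftrightarrow>
    i \<in> I \<and> k \<in> {1..n i} \<and> j = i \<and> l = k \<and> (\<exists>g\<in>carrier (G i). f = (i, k, g))"
  by (auto simp: coprod_cat_def Let_def)

lemma coprod_comp: "c_comp (coprod_cat I n G) (i, k, g) (j, l, h) = (i, k, g \<otimes>\<^bsub>G i\<^esub> h)"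
  by (simp add: coprod_cat_def Let_def)

lemma coprod_id: "c_id (coprod_cat I n G) (i, k) = (i, k, \<one>\<^bsub>G i\<^esub>)"
  by (simp add: coprod_cat_def Let_def)

lemma coprod_mor: "mor (coprod_cat I n G) = {(i, k, g). i \<in> I \<and> k \<in> {1..n i} \<and> g \<in> carrier (G i)}"
  by (force simp: mor_def coprod_obj coprod_hom_iff)

lemma coprod_objE:
  assumes "x \<in> c_obj (coprod_cat I n G)"
  obtains i k where "x = (i, k)" "i \<in> I" "k \<in> {1..n i}"
  using assms by (auto simp: coprod_obj)

lemma coprod_morE:
  assumes "f \<in> mor (coprod_cat I n G)"
  obtains i k g where "f = (i, k, g)" "i \<in> I" "k \<in> {1..n i}" "g \<in> carrier (G i)"
  using assms by (auto simp: coprod_mor)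

type_synonym ('i, 'g) coprod_endo = "('i \<times> nat \<Rightarrow> 'i \<times> nat) \<times> ('i \<times> nat \<times> 'g \<Rightarrow> 'i \<times> nat \<times> 'g)"

definition coprod_functor :: "'i set \<Rightarrow> ('i \<Rightarrow> nat) \<Rightarrow> ('i \<Rightarrow> 'g monoid) \<Rightarrow> ('i \<Rightarrow> nat \<Rightarrow> nat)
    \<Rightarrow> ('i \<Rightarrow> nat \<Rightarrow> 'g \<Rightarrow> 'g) \<Rightarrow> ('i, 'g) coprod_endo" where
  "coprod_functor I n G \<sigma> \<phi> =
    (\<lambda>(i, k)\<in>c_obj (coprod_cat I n G). (i, \<sigma> i k),
     \<lambda>(i, k, g)\<in>mor (coprod_cat I n G). (i, \<sigma> i k, \<phi> i k g))"

lemma coprod_functor_obj [simp]: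
  "\<lbrakk>i \<in> I; k \<in> {1..n i}\<rbrakk> \<Longrightarrow> fst (coprod_functor I n G \<sigma> \<phi>) (i, k) = (i, \<sigma> i k)"
  by (simp add: coprod_functor_def coprod_obj)

lemma coprod_functor_mor [simp]:
  "\<lbrakk>i \<in> I; k \<in> {1..n i}; g \<in> carrier (G i)\<rbrakk>
    \<Longrightarrow> snd (coprod_functor I n G \<sigma> \<phi>) (i, k, g) = (i, \<sigma> i k, \<phi> i k g)"
  by (simp add: coprod_functor_def coprod_mor)

lemma ext_functor_coprod_functor: "ext_functor (coprod_cat I n G) (coprod_functor I n G \<sigma> \<phi>)"
  by (simp add: coprod_functor_def ext_functor_def)

lemma coprod_functor_cong:
  assumes "\<And>i k. \<lbrakk>i \<in> I; k \<in> {1..n i}\<rbrakk> \<Longrightarrow> \<sigma> i k = \<sigma>' i k"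
    and "\<And>i k g. \<lbrakk>i \<in> I; k \<in> {1..n i}; g \<in> carrier (G i)\<rbrakk> \<Longrightarrow> \<phi> i k g = \<phi>' i k g"
  shows "coprod_functor I n G \<sigma> \<phi> = coprod_functor I n G \<sigma>' \<phi>'"
  unfolding coprod_functor_def using assms
  by (auto intro!: restrict_ext simp: coprod_obj coprod_mor)

lemma coprod_functor_id:
  "coprod_functor I n G (\<lambda>i k. k) (\<lambda>i k g. g) = (\<lambda>x\<in>c_obj (coprod_cat I n G). x, \<lambda>f\<in>mor (coprod_cat I n G). f)"
  unfolding coprod_functor_def by (auto intro!: restrict_ext simp: coprod_obj coprod_mor)

lemma coprod_functor_compose:
  assumes \<tau>: "\<And>i k. \<lbrakk>i \<in> I; k \<in> {1..n i}\<rbrakk> \<Longrightarrow> \<tau> i k \<in> {1..n i}"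
    and \<psi>: "\<And>i k g. \<lbrakk>i \<in> I; k \<in> {1..n i}; g \<in> carrier (G i)\<rbrakk> \<Longrightarrow> \<psi> i k g \<in> carrier (G i)"
  shows "fcomp_r (coprod_cat I n G) (coprod_functor I n G \<sigma> \<phi>) (coprod_functor I n G \<tau> \<psi>)
    = coprod_functor I n G (\<lambda>i k. \<sigma> i (\<tau> i k)) (\<lambda>i k g. \<phi> i (\<tau> i k) (\<psi> i k g))"
  unfolding fcomp_r_def
  by (rule prod_eqI; rule extensionalityI[where A = "c_obj (coprod_cat I n G)"]
      extensionalityI[where A = "mor (coprod_cat I n G)"])
    (auto simp: coprod_functor_def coprod_obj coprod_mor \<tau> \<psi>)

definition arrow_part :: "('i, 'g) coprod_endo \<Rightarrow> 'i \<Rightarrow> nat \<Rightarrow> 'g \<Rightarrow> 'g"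
  where "arrow_part F i k g = snd (snd (snd F (i, k, g)))"

lemma coprod_nat_trans_component:
  assumes \<alpha>: "nat_trans (coprod_cat I n G) (coprod_cat I n G) H H' \<alpha>"
    and x: "(i, k) \<in> c_obj (coprod_cat I n G)" and H: "fst H (i, k) = (i, l)"
  shows "fst H' (i, k) = (i, l)" "\<alpha> (i, k) = (i, l, snd (snd (\<alpha> (i, k))))"
    "snd (snd (\<alpha> (i, k))) \<in> carrier (G i)"
proof -
  obtain j l' where H': "fst H' (i, k) = (j, l')"
    by (cases "fst H' (i, k)")
  have "\<alpha> (i, k) \<in> c_hom (coprod_cat I n G) (fst H (i, k)) (fst H' (i, k))"
    using \<alpha> x unfolding nat_trans_def by blast
  then show "fst H' (i, k) = (i, l)" "\<alpha> (i, k) = (i, l, snd (snd (\<alpha> (i, k))))"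
    "snd (snd (\<alpha> (i, k))) \<in> carrier (G i)"
    unfolding H H' by (auto simp: coprod_hom_iff)
qed

lemma coprod_nat_trans_intertwines:
  assumes \<alpha>: "nat_trans (coprod_cat I n G) (coprod_cat I n G) H H' \<alpha>"
    and x: "(i, k) \<in> c_obj (coprod_cat I n G)" and H: "fst H (i, k) = (i, l)"
    and \<phi>: "\<And>g. g \<in> carrier (G i) \<Longrightarrow> snd H (i, k, g) = (i, l, \<phi> g)"
    and \<phi>': "\<And>g. g \<in> carrier (G i) \<Longrightarrow> snd H' (i, k, g) = (i, l, \<phi>' g)"
  shows "intertwines (G i) (snd (snd (\<alpha> (i, k)))) \<phi> \<phi>'"
  unfolding intertwines_def
proof (intro conjI ballI)
  note component = coprod_nat_trans_component[OF \<alpha> x H]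
  show "snd (snd (\<alpha> (i, k))) \<in> carrier (G i)"
    by (rule component(3))
  fix g assume g: "g \<in> carrier (G i)"
  have "(i, k, g) \<in> c_hom (coprod_cat I n G) (i, k) (i, k)"
    using x g by (simp add: coprod_obj_iff coprod_hom_iff)
  then have "c_comp (coprod_cat I n G) (\<alpha> (i, k)) (snd H (i, k, g))
      = c_comp (coprod_cat I n G) (snd H' (i, k, g)) (\<alpha> (i, k))"
    using \<alpha> x unfolding nat_trans_def by blast
  then show "snd (snd (\<alpha> (i, k))) \<otimes>\<^bsub>G i\<^esub> \<phi> g = \<phi>' g \<otimes>\<^bsub>G i\<^esub> snd (snd (\<alpha> (i, k)))"
    using \<phi>[OF g] \<phi>'[OF g] component(2) by (metis coprod_comp snd_conv)
qed

lemma coprod_equivalence_inj_obj: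
  assumes "is_equivalence (coprod_cat I n G) (coprod_cat I n G) F"
  shows "inj_on (fst F) (c_obj (coprod_cat I n G))"
proof -
  obtain Q \<eta> where \<eta>: "nat_trans (coprod_cat I n G) (coprod_cat I n G) (id, id) (fcomp Q F) \<eta>"
    using assms unfolding is_equivalence_def nat_iso_def by blast
  have "fst Q (fst F x) = x" if "x \<in> c_obj (coprod_cat I n G)" for x
    using that coprod_nat_trans_component(1)[OF \<eta>] by (auto elim!: coprod_objE simp: fcomp_def coprod_obj_iff)
  then show ?thesis
    by (rule inj_on_inverseI)
qed

locale coprod_of_groups =
  fixes I :: "'i set" and n :: "'i \<Rightarrow> nat" and G :: "'i \<Rightarrow> 'g monoid"
  assumes grp: "i \<in> I \<Longrightarrow> group (G i)"
begin

lemma coprod_id_laws: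
  shows "x \<in> c_obj (coprod_cat I n G) \<Longrightarrow> c_id (coprod_cat I n G) x \<in> c_hom (coprod_cat I n G) x x"
    and "\<lbrakk>x \<in> c_obj (coprod_cat I n G); y \<in> c_obj (coprod_cat I n G); f \<in> c_hom (coprod_cat I n G) x y\<rbrakk>
      \<Longrightarrow> c_comp (coprod_cat I n G) (c_id (coprod_cat I n G) y) f = f"
    and "\<lbrakk>x \<in> c_obj (coprod_cat I n G); y \<in> c_obj (coprod_cat I n G); f \<in> c_hom (coprod_cat I n G) x y\<rbrakk>
      \<Longrightarrow> c_comp (coprod_cat I n G) f (c_id (coprod_cat I n G) x) = f"
  using group.is_monoid[OF grp]
  by (auto simp: coprod_obj coprod_hom_iff coprod_id coprod_comp)

lemma coprod_functor_is_functor: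
  assumes \<sigma>: "\<And>i k. \<lbrakk>i \<in> I; k \<in> {1..n i}\<rbrakk> \<Longrightarrow> \<sigma> i k \<in> {1..n i}"
    and \<phi>: "\<And>i k. \<lbrakk>i \<in> I; k \<in> {1..n i}\<rbrakk> \<Longrightarrow> \<phi> i k \<in> hom (G i) (G i)"
  shows "is_functor (coprod_cat I n G) (coprod_cat I n G) (coprod_functor I n G \<sigma> \<phi>)"
proof (rule is_functorI)
  fix x y z f g
  assume "x \<in> c_obj (coprod_cat I n G)" "y \<in> c_obj (coprod_cat I n G)"
    and "f \<in> c_hom (coprod_cat I n G) x y" "g \<in> c_hom (coprod_cat I n G) y z"
  moreover obtain j l where "z = (j, l)"
    by (cases z)
  ultimately obtain i k a b where "i \<in> I" "k \<in> {1..n i}" "a \<in> carrier (G i)" "b \<in> carrier (G i)"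
    and "f = (i, k, a)" "g = (i, k, b)"
    by (auto elim!: coprod_objE simp: coprod_hom_iff)
  then show "snd (coprod_functor I n G \<sigma> \<phi>) (c_comp (coprod_cat I n G) g f)
      = c_comp (coprod_cat I n G) (snd (coprod_functor I n G \<sigma> \<phi>) g) (snd (coprod_functor I n G \<sigma> \<phi>) f)"
    using \<phi> grp by (simp add: coprod_comp hom_mult group.is_monoid monoid.m_closed)
next
  fix x assume "x \<in> c_obj (coprod_cat I n G)"
  then show "fst (coprod_functor I n G \<sigma> \<phi>) x \<in> c_obj (coprod_cat I n G)"
    using \<sigma> by (auto elim!: coprod_objE simp: coprod_obj_iff)
next
  fix x y f
  assume "x \<in> c_obj (coprod_cat I n G)" "y \<in> c_obj (coprod_cat I n G)" "f \<in> c_hom (coprod_cat I n G) x y"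
  then obtain i k g where "x = (i, k)" "y = (i, k)" "f = (i, k, g)" "i \<in> I" "k \<in> {1..n i}" "g \<in> carrier (G i)"
    by (auto elim!: coprod_objE simp: coprod_hom_iff)
  then show "snd (coprod_functor I n G \<sigma> \<phi>) f
      \<in> c_hom (coprod_cat I n G) (fst (coprod_functor I n G \<sigma> \<phi>) x) (fst (coprod_functor I n G \<sigma> \<phi>) y)"
    using \<sigma> hom_in_carrier[OF \<phi>] by (simp add: coprod_hom_iff)
next
  fix x assume "x \<in> c_obj (coprod_cat I n G)"
  then obtain i k where "x = (i, k)" "i \<in> I" "k \<in> {1..n i}"
    by (rule coprod_objE)
  then show "snd (coprod_functor I n G \<sigma> \<phi>) (c_id (coprod_cat I n G) x)
      = c_id (coprod_cat I n G) (fst (coprod_functor I n G \<sigma> \<phi>) x)"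
    using \<phi> grp by (simp add: coprod_id hom_one group.is_monoid monoid.one_closed)
qed

lemma coprod_functor_is_equivalence:
  assumes \<sigma>: "\<And>i. i \<in> I \<Longrightarrow> bij_betw (\<sigma> i) {1..n i} {1..n i}"
    and \<phi>: "\<And>i k. \<lbrakk>i \<in> I; k \<in> {1..n i}\<rbrakk> \<Longrightarrow> \<phi> i k \<in> iso (G i) (G i)"
  shows "is_equivalence (coprod_cat I n G) (coprod_cat I n G) (coprod_functor I n G \<sigma> \<phi>)"
proof -
  define \<rho> where "\<rho> i = inv_into {1..n i} (\<sigma> i)" for i
  define \<psi> where "\<psi> i l = inv_into (carrier (G i)) (\<phi> i (\<rho> i l))" for i l
  have \<sigma>_in: "\<sigma> i k \<in> {1..n i}" and \<rho>_in: "\<rho> i k \<in> {1..n i}"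
    and \<rho>_\<sigma>: "\<rho> i (\<sigma> i k) = k" and \<sigma>_\<rho>: "\<sigma> i (\<rho> i k) = k"
    if "i \<in> I" "k \<in> {1..n i}" for i k
    using \<sigma>[OF that(1)] that(2) unfolding \<rho>_def
    by (simp_all add: bij_betw_apply bij_betw_inv_into_left bij_betw_inv_into_right inv_into_into
        bij_betw_def)
  have \<psi>_iso: "\<psi> i k \<in> iso (G i) (G i)" if "i \<in> I" "k \<in> {1..n i}" for i k
    unfolding \<psi>_def using group.iso_set_sym[OF grp \<phi>] that \<rho>_in by blast
  have \<phi>_bij: "bij_betw (\<phi> i k) (carrier (G i)) (carrier (G i))" if "i \<in> I" "k \<in> {1..n i}" for i k
    using \<phi>[OF that] by (simp add: iso_def)
  have \<psi>_\<phi>: "\<psi> i (\<sigma> i k) (\<phi> i k g) = g" and \<phi>_\<psi>: "\<phi> i (\<rho> i k) (\<psi> i k g) = g"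
    if "i \<in> I" "k \<in> {1..n i}" "g \<in> carrier (G i)" for i k g
    using bij_betw_inv_into_left[OF \<phi>_bij[OF that(1,2)] that(3)]
      bij_betw_inv_into_right[OF \<phi>_bij[OF that(1) \<rho>_in[OF that(1,2)]] that(3)]
    unfolding \<psi>_def by (simp_all add: \<rho>_\<sigma> that)
  have carrier: "\<phi> i k g \<in> carrier (G i)" "\<psi> i k g \<in> carrier (G i)"
    if "i \<in> I" "k \<in> {1..n i}" "g \<in> carrier (G i)" for i k g
    using that hom_in_carrier[OF iso_imp_homomorphism[OF \<phi>]] hom_in_carrier[OF iso_imp_homomorphism[OF \<psi>_iso]]
    by blast+
  show ?thesis
  proof (rule is_equivalence_if_inverse[where Q = "coprod_functor I n G \<rho> \<psi>",
        OF _ _ _ _ _ _ coprod_id_laws])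
    show "is_functor (coprod_cat I n G) (coprod_cat I n G) (coprod_functor I n G \<sigma> \<phi>)"
      using \<phi> by (intro coprod_functor_is_functor grp \<sigma>_in) (simp_all add: iso_def)
    show "is_functor (coprod_cat I n G) (coprod_cat I n G) (coprod_functor I n G \<rho> \<psi>)"
      using \<psi>_iso by (intro coprod_functor_is_functor grp \<rho>_in) (simp_all add: iso_def)
  qed (auto elim!: coprod_objE coprod_morE simp: \<sigma>_in \<rho>_in \<rho>_\<sigma> \<sigma>_\<rho> \<psi>_\<phi> \<phi>_\<psi> carrier)
qed

lemma coprod_functor_nat_iso:
  assumes \<sigma>: "\<And>i k. \<lbrakk>i \<in> I; k \<in> {1..n i}\<rbrakk> \<Longrightarrow> \<sigma> i k \<in> {1..n i}"
    and a: "\<And>i k. \<lbrakk>i \<in> I; k \<in> {1..n i}\<rbrakk> \<Longrightarrow> intertwines (G i) (a i k) (\<phi> i k) (\<phi>' i k)"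
  shows "nat_iso (coprod_cat I n G) (coprod_cat I n G) (coprod_functor I n G \<sigma> \<phi>)
    (coprod_functor I n G \<sigma> \<phi>') (\<lambda>(i, k)\<in>c_obj (coprod_cat I n G). (i, \<sigma> i k, a i k))"
  unfolding nat_iso_def nat_trans_def
proof (intro conjI ballI)
  fix x assume "x \<in> c_obj (coprod_cat I n G)"
  then obtain i k where x: "x = (i, k)" "i \<in> I" "k \<in> {1..n i}"
    by (rule coprod_objE)
  interpret group "G i" using grp x by blast
  have ak: "a i k \<in> carrier (G i)" and \<sigma>k: "\<sigma> i k \<in> {1..n i}"
    using a[OF x(2,3)] \<sigma>[OF x(2,3)] by (simp_all add: intertwines_def)
  then show "(\<lambda>(i, k)\<in>c_obj (coprod_cat I n G). (i, \<sigma> i k, a i k)) x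
      \<in> c_hom (coprod_cat I n G) (fst (coprod_functor I n G \<sigma> \<phi>) x) (fst (coprod_functor I n G \<sigma> \<phi>') x)"
    using x by (simp add: coprod_obj_iff coprod_hom_iff)
  show "is_iso_in (coprod_cat I n G) (fst (coprod_functor I n G \<sigma> \<phi>) x)
      (fst (coprod_functor I n G \<sigma> \<phi>') x) ((\<lambda>(i, k)\<in>c_obj (coprod_cat I n G). (i, \<sigma> i k, a i k)) x)"
    unfolding is_iso_in_def using x ak \<sigma>k
    by (auto simp: coprod_obj_iff coprod_hom_iff coprod_comp coprod_id
        intro!: bexI[of _ "(i, \<sigma> i k, inv\<^bsub>G i\<^esub> (a i k))"])
next
  fix x y f
  assume "x \<in> c_obj (coprod_cat I n G)" "y \<in> c_obj (coprod_cat I n G)" "f \<in> c_hom (coprod_cat I n G) x y"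
  then obtain i k g where "x = (i, k)" "y = (i, k)" "f = (i, k, g)" "i \<in> I" "k \<in> {1..n i}" "g \<in> carrier (G i)"
    by (auto elim!: coprod_objE simp: coprod_hom_iff)
  then show "c_comp (coprod_cat I n G) ((\<lambda>(i, k)\<in>c_obj (coprod_cat I n G). (i, \<sigma> i k, a i k)) y)
      (snd (coprod_functor I n G \<sigma> \<phi>) f)
    = c_comp (coprod_cat I n G) (snd (coprod_functor I n G \<sigma> \<phi>') f)
      ((\<lambda>(i, k)\<in>c_obj (coprod_cat I n G). (i, \<sigma> i k, a i k)) x)"
    using a by (simp add: coprod_obj_iff coprod_comp intertwines_def)
qed

lemma coprod_endofunctor_arrow_part:
  assumes F: "is_functor (coprod_cat I n G) (coprod_cat I n G) F"
    and x: "(i, k) \<in> c_obj (coprod_cat I n G)" and Fx: "fst F (i, k) = (j, l)"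
  shows "(j, l) \<in> c_obj (coprod_cat I n G)"
    and "g \<in> carrier (G i) \<Longrightarrow> snd F (i, k, g) = (j, l, arrow_part F i k g)"
    and "arrow_part F i k \<in> hom (G i) (G j)"
proof -
  let ?C = "coprod_cat I n G"
  show y: "(j, l) \<in> c_obj ?C"
    using functor_obj[OF F x] Fx by simp
  have i: "i \<in> I" and arrow: "\<And>g. g \<in> carrier (G i) \<Longrightarrow> (i, k, g) \<in> c_hom ?C (i, k) (i, k)"
    using x by (simp_all add: coprod_obj_iff coprod_hom_iff)
  have image: "snd F (i, k, g) = (j, l, arrow_part F i k g) \<and> arrow_part F i k g \<in> carrier (G j)"
    if "g \<in> carrier (G i)" for g
    using functor_hom[OF F x x arrow[OF that]] Fx unfolding arrow_part_def
    by (auto simp: coprod_hom_iff)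
  then show "g \<in> carrier (G i) \<Longrightarrow> snd F (i, k, g) = (j, l, arrow_part F i k g)"
    by blast
  have "arrow_part F i k (h \<otimes>\<^bsub>G i\<^esub> g) = arrow_part F i k h \<otimes>\<^bsub>G j\<^esub> arrow_part F i k g"
    if "g \<in> carrier (G i)" "h \<in> carrier (G i)" for g h
    using functor_comp[OF F x x x arrow[OF that(1)] arrow[OF that(2)]] image[OF that(1)] image[OF that(2)]
      image[OF monoid.m_closed[OF group.is_monoid[OF grp[OF i]] that(2,1)]]
    by (simp add: coprod_comp)
  then show "arrow_part F i k \<in> hom (G i) (G j)"
    using image by (auto simp: hom_def)
qed

text \<open>An equivalence can only identify copies of isomorphic groups: composing the arrow
  parts of an equivalence and of a quasi-inverse gives inner automorphisms, by the
  naturality of the unit and the counit.\<close>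

lemma coprod_equivalence_arrow_part_iso:
  assumes F: "is_equivalence (coprod_cat I n G) (coprod_cat I n G) F"
    and x: "(i, k) \<in> c_obj (coprod_cat I n G)" and Fx: "fst F (i, k) = (j, l)"
  shows "arrow_part F i k \<in> iso (G i) (G j)"
proof -
  let ?C = "coprod_cat I n G"
  obtain Q \<eta> \<epsilon> where F_fun: "is_functor ?C ?C F" and Q_fun: "is_functor ?C ?C Q"
    and \<eta>: "nat_trans ?C ?C (id, id) (fcomp Q F) \<eta>" and \<epsilon>: "nat_trans ?C ?C (fcomp F Q) (id, id) \<epsilon>"
    using F unfolding is_equivalence_def nat_iso_def by blast
  note F_arrow = coprod_endofunctor_arrow_part[OF F_fun x Fx]
  have y: "(j, l) \<in> c_obj ?C" and i: "i \<in> I" and j: "j \<in> I"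
    using F_arrow(1) x by (simp_all add: coprod_obj_iff)
  have Qy: "fst Q (j, l) = (i, k)"
    using coprod_nat_trans_component(1)[OF \<eta> x] Fx by (simp add: fcomp_def)
  note Q_arrow = coprod_endofunctor_arrow_part[OF Q_fun y Qy]
  let ?\<phi> = "arrow_part F i k" and ?\<psi> = "arrow_part Q j l"
  have \<phi>: "?\<phi> \<in> hom (G i) (G j)" and \<psi>: "?\<psi> \<in> hom (G j) (G i)"
    using F_arrow(3) Q_arrow(3) .
  have "intertwines (G i) (snd (snd (\<eta> (i, k)))) (\<lambda>g. g) (\<lambda>g. ?\<psi> (?\<phi> g))"
    using F_arrow(2) Q_arrow(2) hom_in_carrier[OF \<phi>]
    by (intro coprod_nat_trans_intertwines[OF \<eta> x]) (simp_all add: fcomp_def)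
  moreover have "intertwines (G j) (snd (snd (\<epsilon> (j, l)))) (\<lambda>h. ?\<phi> (?\<psi> h)) (\<lambda>h. h)"
    using F_arrow(2) Q_arrow(2) hom_in_carrier[OF \<psi>] Fx Qy
    by (intro coprod_nat_trans_intertwines[OF \<epsilon> y]) (simp_all add: fcomp_def)
  ultimately have "bij_betw ?\<phi> (carrier (G i)) (carrier (G j))"
    by (rule bij_betw_if_inverse_up_to_conjugation[OF grp[OF i] grp[OF j] hom_funcset[OF \<phi>] hom_funcset[OF \<psi>]])
  with \<phi> show ?thesis
    by (simp add: iso_def)
qed

end

section \<open>The comparison isomorphism\<close>

abbreviation wreath_prod :: "'i set \<Rightarrow> ('i \<Rightarrow> nat) \<Rightarrow> ('i \<Rightarrow> 'g monoid) \<Rightarrow> _" where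
  "wreath_prod I n G \<equiv> prod_mcat I (\<lambda>i. wreath (n i) (Sym_2grp (grp_cat (G i))))"

type_synonym 'g grp_endo = "(unit \<Rightarrow> unit) \<times> ('g \<Rightarrow> 'g)"
type_synonym ('i, 'g) wr_obj = "'i \<Rightarrow> (nat \<Rightarrow> nat) \<times> (nat \<Rightarrow> 'g grp_endo)"
type_synonym ('i, 'g) wr_mor = "'i \<Rightarrow> (nat \<Rightarrow> nat) \<times> (nat \<Rightarrow> 'g grp_endo \<times> 'g grp_endo \<times> (unit \<Rightarrow> 'g))"

definition wr_to_Sym :: "'i set \<Rightarrow> ('i \<Rightarrow> nat) \<Rightarrow> ('i \<Rightarrow> 'g monoid) \<Rightarrow> ('i, 'g) wr_obj \<Rightarrow> ('i, 'g) coprod_endo"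
  where "wr_to_Sym I n G D = coprod_functor I n G (\<lambda>i. fst (D i)) (\<lambda>i k. snd (snd (D i) k))"

text \<open>An arrow of the wreath product records its source and target componentwise;
  \<open>wr_dom\<close> and \<open>wr_cod\<close> read them off, so that the comparison on arrows is a
  function of the arrow alone.\<close>

definition wr_dom :: "'i set \<Rightarrow> ('i \<Rightarrow> nat) \<Rightarrow> ('i, 'g) wr_mor \<Rightarrow> ('i, 'g) wr_obj" where
  "wr_dom I n m = (\<lambda>i\<in>I. (fst (m i), \<lambda>k\<in>{1..n i}. fst (snd (m i) k)))"

definition wr_cod :: "'i set \<Rightarrow> ('i \<Rightarrow> nat) \<Rightarrow> ('i, 'g) wr_mor \<Rightarrow> ('i, 'g) wr_obj" where
  "wr_cod I n m = (\<lambda>i\<in>I. (fst (m i), \<lambda>k\<in>{1..n i}. fst (snd (snd (m i) k))))"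

definition wr_cell :: "'i set \<Rightarrow> ('i \<Rightarrow> nat) \<Rightarrow> ('i \<Rightarrow> 'g monoid) \<Rightarrow> ('i, 'g) wr_mor
    \<Rightarrow> 'i \<times> nat \<Rightarrow> 'i \<times> nat \<times> 'g" where
  "wr_cell I n G m = (\<lambda>(i, k)\<in>c_obj (coprod_cat I n G). (i, fst (m i) k, snd (snd (snd (m i) k)) ()))"

definition wr_to_Sym_mor :: "'i set \<Rightarrow> ('i \<Rightarrow> nat) \<Rightarrow> ('i \<Rightarrow> 'g monoid) \<Rightarrow> ('i, 'g) wr_mor
    \<Rightarrow> ('i, 'g) coprod_endo \<times> ('i, 'g) coprod_endo \<times> ('i \<times> nat \<Rightarrow> 'i \<times> nat \<times> 'g)" where
  "wr_to_Sym_mor I n G m = (wr_to_Sym I n G (wr_dom I n m), wr_to_Sym I n G (wr_cod I n m), wr_cell I n G m)"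

text \<open>The permutation of the copies of \<open>G i\<close> is extended by the identity outside
  \<open>{1..n i}\<close>, as required by \<open>permutes\<close>.\<close>

definition Sym_to_wr :: "'i set \<Rightarrow> ('i \<Rightarrow> nat) \<Rightarrow> ('i \<Rightarrow> 'g monoid) \<Rightarrow> ('i, 'g) coprod_endo \<Rightarrow> ('i, 'g) wr_obj"
  where "Sym_to_wr I n G F = (\<lambda>i\<in>I. (\<lambda>k. if k \<in> {1..n i} then snd (fst F (i, k)) else k,
       \<lambda>k\<in>{1..n i}. (\<lambda>u. (), \<lambda>g\<in>carrier (G i). arrow_part F i k g)))"

definition Sym_to_wr_mor :: "'i set \<Rightarrow> ('i \<Rightarrow> nat) \<Rightarrow> ('i \<Rightarrow> 'g monoid)
    \<Rightarrow> ('i, 'g) coprod_endo \<times> ('i, 'g) coprod_endo \<times> ('i \<times> nat \<Rightarrow> 'i \<times> nat \<times> 'g) \<Rightarrow> ('i, 'g) wr_mor" where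
  "Sym_to_wr_mor I n G m = (\<lambda>i\<in>I. (fst (Sym_to_wr I n G (fst m) i), \<lambda>k\<in>{1..n i}.
      (snd (Sym_to_wr I n G (fst m) i) k, snd (Sym_to_wr I n G (fst (snd m)) i) k,
       \<lambda>u. snd (snd (snd (snd m) (i, k))))))"

context coprod_of_groups
begin

lemma wreath_prod_obj_iff:
  "D \<in> c_obj (wreath_prod I n G) \<longleftrightarrow> D \<in> extensional I \<and> (\<forall>i\<in>I. fst (D i) permutes {1..n i} \<and>
     snd (D i) \<in> extensional {1..n i} \<and> (\<forall>k\<in>{1..n i}. snd (snd (D i) k) \<in> auto (G i)))"
  by (auto simp: prod_mcat_def PiE_iff wreath_obj_iff Sym_grp_obj_iff grp)

lemma wreath_prod_objD:
  assumes "D \<in> c_obj (wreath_prod I n G)" "i \<in> I"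
  shows "fst (D i) permutes {1..n i}" "k \<in> {1..n i} \<Longrightarrow> fst (D i) k \<in> {1..n i}"
    "k \<in> {1..n i} \<Longrightarrow> snd (snd (D i) k) \<in> auto (G i)"
    "\<lbrakk>k \<in> {1..n i}; g \<in> carrier (G i)\<rbrakk> \<Longrightarrow> snd (snd (D i) k) g \<in> carrier (G i)"
  using assms permutes_in_image[of "fst (D i)" "{1..n i}" k]
  by (auto simp: wreath_prod_obj_iff dest: auto_funcset)

lemma wreath_prod_hom_iff:
  assumes D: "D \<in> c_obj (wreath_prod I n G)" and D': "D' \<in> c_obj (wreath_prod I n G)"
  shows "m \<in> c_hom (wreath_prod I n G) D D' \<longleftrightarrow> m \<in> extensional I \<and>
    (\<forall>i\<in>I. fst (m i) = fst (D i) \<and> fst (D' i) = fst (D i) \<and> snd (m i) \<in> extensional {1..n i} \<and>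
      (\<forall>k\<in>{1..n i}. fst (snd (m i) k) = snd (D i) k \<and> fst (snd (snd (m i) k)) = snd (D' i) k \<and>
        intertwines (G i) (snd (snd (snd (m i) k)) ()) (snd (snd (D i) k)) (snd (snd (D' i) k))))"
    (is "_ \<longleftrightarrow> _ \<and> (\<forall>i\<in>I. ?R i)")
proof -
  have DD': "D \<in> (\<Pi>\<^sub>E i\<in>I. c_obj (wreath (n i) (Sym_2grp (grp_cat (G i)))))"
    "D' \<in> (\<Pi>\<^sub>E i\<in>I. c_obj (wreath (n i) (Sym_2grp (grp_cat (G i)))))"
    using D D' by (simp_all add: prod_mcat_def)
  have "m i \<in> c_hom (wreath (n i) (Sym_2grp (grp_cat (G i)))) (D i) (D' i) \<longleftrightarrow> ?R i"
    if i: "i \<in> I" for i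
  proof -
    have Di: "D i \<in> c_obj (wreath (n i) (Sym_2grp (grp_cat (G i))))"
      and D'i: "D' i \<in> c_obj (wreath (n i) (Sym_2grp (grp_cat (G i))))"
      using DD' i by auto
    then have "snd (D i) k \<in> c_obj (Sym_2grp (grp_cat (G i)))"
      "snd (D' i) k \<in> c_obj (Sym_2grp (grp_cat (G i)))" if "k \<in> {1..n i}" for k
      using that by (simp_all add: wreath_obj_iff)
    then show ?thesis
      unfolding wreath_hom_iff[OF Di D'i] by (auto simp: Sym_grp_hom_iff[OF grp[OF i]])
  qed
  then show ?thesis
    using DD' by (auto simp: prod_mcat_def PiE_iff)
qed

lemma wreath_prod_homD:
  assumes "m \<in> c_hom (wreath_prod I n G) D D'"
    and "D \<in> c_obj (wreath_prod I n G)" "D' \<in> c_obj (wreath_prod I n G)" and i: "i \<in> I"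
  shows "fst (m i) = fst (D i)" "fst (D' i) = fst (D i)"
    "k \<in> {1..n i} \<Longrightarrow> fst (snd (m i) k) = snd (D i) k"
    "k \<in> {1..n i} \<Longrightarrow> fst (snd (snd (m i) k)) = snd (D' i) k"
    "k \<in> {1..n i} \<Longrightarrow> intertwines (G i) (snd (snd (snd (m i) k)) ()) (snd (snd (D i) k)) (snd (snd (D' i) k))"
  using assms by (simp_all add: wreath_prod_hom_iff)

lemma mcat_basic_wreath_prod: "mcat_basic (wreath_prod I n G)"
  by (intro mcat_basic_prod mcat_basic_wreath mcat_basic_Sym_grp grp)

lemma wr_to_Sym_obj_eq:
  "\<lbrakk>i \<in> I; k \<in> {1..n i}\<rbrakk> \<Longrightarrow> fst (wr_to_Sym I n G D) (i, k) = (i, fst (D i) k)"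
  "\<lbrakk>i \<in> I; k \<in> {1..n i}; g \<in> carrier (G i)\<rbrakk>
    \<Longrightarrow> snd (wr_to_Sym I n G D) (i, k, g) = (i, fst (D i) k, snd (snd (D i) k) g)"
  by (simp_all add: wr_to_Sym_def)

lemma wr_to_Sym_obj:
  assumes D: "D \<in> c_obj (wreath_prod I n G)"
  shows "wr_to_Sym I n G D \<in> c_obj (Sym_2grp (coprod_cat I n G))"
proof -
  have "is_equivalence (coprod_cat I n G) (coprod_cat I n G) (wr_to_Sym I n G D)"
    unfolding wr_to_Sym_def
    by (intro coprod_functor_is_equivalence permutes_imp_bij wreath_prod_objD[OF D])
      (use wreath_prod_objD(3)[OF D] in \<open>auto simp: auto_def iso_def Bij_def\<close>)
  then show ?thesis
    by (simp add: Sym_2grp_obj wr_to_Sym_def ext_functor_coprod_functor)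
qed

lemma wr_dom_cod:
  assumes D: "D \<in> c_obj (wreath_prod I n G)" and D': "D' \<in> c_obj (wreath_prod I n G)"
    and m: "m \<in> c_hom (wreath_prod I n G) D D'"
  shows "wr_dom I n m = D" "wr_cod I n m = D'"
proof -
  have ext: "D \<in> extensional I" "D' \<in> extensional I"
    "\<And>i. i \<in> I \<Longrightarrow> snd (D i) \<in> extensional {1..n i}" "\<And>i. i \<in> I \<Longrightarrow> snd (D' i) \<in> extensional {1..n i}"
    using D D' by (simp_all add: wreath_prod_obj_iff)
  note hom = wreath_prod_homD[OF m D D']
  show "wr_dom I n m = D"
    by (rule extensionalityI[OF _ ext(1)])
      (auto simp: wr_dom_def prod_eq_iff hom intro!: extensionalityI[OF _ ext(3)])
  show "wr_cod I n m = D'"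
    by (rule extensionalityI[OF _ ext(2)])
      (auto simp: wr_cod_def prod_eq_iff hom intro!: extensionalityI[OF _ ext(4)])
qed

lemma wr_to_Sym_mor_eq:
  assumes "D \<in> c_obj (wreath_prod I n G)" "D' \<in> c_obj (wreath_prod I n G)"
    and "m \<in> c_hom (wreath_prod I n G) D D'"
  shows "wr_to_Sym_mor I n G m = (wr_to_Sym I n G D, wr_to_Sym I n G D', wr_cell I n G m)"
  using wr_dom_cod[OF assms] by (simp add: wr_to_Sym_mor_def)

lemma wr_cell_eq:
  "\<lbrakk>i \<in> I; k \<in> {1..n i}\<rbrakk> \<Longrightarrow> wr_cell I n G m (i, k) = (i, fst (m i) k, snd (snd (snd (m i) k)) ())"
  by (simp add: wr_cell_def coprod_obj_iff)

lemma wr_to_Sym_mor_hom: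
  assumes D: "D \<in> c_obj (wreath_prod I n G)" and D': "D' \<in> c_obj (wreath_prod I n G)"
    and m: "m \<in> c_hom (wreath_prod I n G) D D'"
  shows "wr_to_Sym_mor I n G m \<in> c_hom (Sym_2grp (coprod_cat I n G)) (wr_to_Sym I n G D) (wr_to_Sym I n G D')"
proof -
  note hom = wreath_prod_homD[OF m D D']
  have cod: "wr_to_Sym I n G D' = coprod_functor I n G (\<lambda>i. fst (D i)) (\<lambda>i k. snd (snd (D' i) k))"
    unfolding wr_to_Sym_def by (rule coprod_functor_cong) (simp_all add: hom)
  have cell: "wr_cell I n G m = (\<lambda>(i, k)\<in>c_obj (coprod_cat I n G). (i, fst (D i) k, snd (snd (snd (m i) k)) ()))"
    unfolding wr_cell_def by (rule restrict_ext) (auto elim!: coprod_objE simp: hom)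
  have "nat_iso (coprod_cat I n G) (coprod_cat I n G) (wr_to_Sym I n G D) (wr_to_Sym I n G D') (wr_cell I n G m)"
    unfolding cell cod unfolding wr_to_Sym_def
    by (rule coprod_functor_nat_iso) (simp_all add: wreath_prod_objD[OF D] hom)
  then show ?thesis
    using wr_to_Sym_obj[OF D] wr_to_Sym_obj[OF D']
    by (simp add: wr_to_Sym_mor_eq[OF D D' m] Sym_2grp_hom wr_cell_def)
qed

lemma wreath_prod_tens_eq:
  assumes "i \<in> I"
  shows "fst (m_tens (wreath_prod I n G) D1 D2 i) = fst (D1 i) \<circ> fst (D2 i)"
    and "\<lbrakk>k \<in> {1..n i}; g \<in> carrier (G i)\<rbrakk> \<Longrightarrow>
      snd (snd (m_tens (wreath_prod I n G) D1 D2 i) k) g = snd (snd (D1 i) (fst (D2 i) k)) (snd (snd (D2 i) k) g)"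
  using assms by (simp_all add: prod_mcat_def wreath_simps Sym_2grp_simps fcomp_r_grp_cat)

lemma wr_to_Sym_tens:
  assumes D1: "D1 \<in> c_obj (wreath_prod I n G)" and D2: "D2 \<in> c_obj (wreath_prod I n G)"
  shows "wr_to_Sym I n G (m_tens (wreath_prod I n G) D1 D2)
    = m_tens (Sym_2grp (coprod_cat I n G)) (wr_to_Sym I n G D1) (wr_to_Sym I n G D2)"
  unfolding Sym_2grp_simps wr_to_Sym_def
  by (subst coprod_functor_compose)
    (auto simp: wreath_prod_objD[OF D2] wreath_prod_tens_eq intro!: coprod_functor_cong)

lemma wr_to_Sym_unit:
  "wr_to_Sym I n G (m_unit (wreath_prod I n G)) = m_unit (Sym_2grp (coprod_cat I n G))"
proof -
  have "wr_to_Sym I n G (m_unit (wreath_prod I n G)) = coprod_functor I n G (\<lambda>i k. k) (\<lambda>i k g. g)"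
    unfolding wr_to_Sym_def
    by (rule coprod_functor_cong) (simp_all add: prod_mcat_def wreath_simps Sym_2grp_simps)
  then show ?thesis
    by (simp add: coprod_functor_id Sym_2grp_simps)
qed

lemma wr_to_Sym_mor_comp:
  assumes D1: "D1 \<in> c_obj (wreath_prod I n G)" and D2: "D2 \<in> c_obj (wreath_prod I n G)"
    and D3: "D3 \<in> c_obj (wreath_prod I n G)"
    and f: "f \<in> c_hom (wreath_prod I n G) D1 D2" and g: "g \<in> c_hom (wreath_prod I n G) D2 D3"
  shows "wr_to_Sym_mor I n G (c_comp (wreath_prod I n G) g f)
    = c_comp (Sym_2grp (coprod_cat I n G)) (wr_to_Sym_mor I n G g) (wr_to_Sym_mor I n G f)"
proof -
  have gf: "c_comp (wreath_prod I n G) g f \<in> c_hom (wreath_prod I n G) D1 D3"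
    by (rule mcat_basic.comp_hom[OF mcat_basic_wreath_prod D1 D2 D3 f g])
  show ?thesis
    unfolding wr_to_Sym_mor_eq[OF D1 D3 gf] wr_to_Sym_mor_eq[OF D1 D2 f] wr_to_Sym_mor_eq[OF D2 D3 g]
    by (auto simp: Sym_2grp_simps wr_cell_def coprod_comp prod_mcat_def wreath_simps
        wreath_prod_homD[OF f D1 D2] wreath_prod_homD[OF g D2 D3] coprod_obj_iff
        elim!: coprod_objE intro!: restrict_ext)
qed

lemma wr_to_Sym_mor_id:
  assumes D: "D \<in> c_obj (wreath_prod I n G)"
  shows "wr_to_Sym_mor I n G (c_id (wreath_prod I n G) D) = c_id (Sym_2grp (coprod_cat I n G)) (wr_to_Sym I n G D)"
proof -
  have "c_id (wreath_prod I n G) D \<in> c_hom (wreath_prod I n G) D D"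
    by (rule mcat_basic.id_hom[OF mcat_basic_wreath_prod D])
  then show ?thesis
    by (auto simp: wr_to_Sym_mor_eq[OF D D] Sym_2grp_simps wr_cell_def prod_mcat_def wreath_simps
        coprod_id wr_to_Sym_obj_eq elim!: coprod_objE intro!: restrict_ext)
qed

lemma wr_to_Sym_mor_tensm:
  assumes D1: "D1 \<in> c_obj (wreath_prod I n G)" and D1': "D1' \<in> c_obj (wreath_prod I n G)"
    and D2: "D2 \<in> c_obj (wreath_prod I n G)" and D2': "D2' \<in> c_obj (wreath_prod I n G)"
    and f: "f \<in> c_hom (wreath_prod I n G) D1 D1'" and g: "g \<in> c_hom (wreath_prod I n G) D2 D2'"
  shows "wr_to_Sym_mor I n G (m_tensm (wreath_prod I n G) f g)
    = m_tensm (Sym_2grp (coprod_cat I n G)) (wr_to_Sym_mor I n G f) (wr_to_Sym_mor I n G g)"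
proof -
  interpret B: mcat_basic "wreath_prod I n G" by (rule mcat_basic_wreath_prod)
  note f' = wreath_prod_homD[OF f D1 D1'] and g' = wreath_prod_homD[OF g D2 D2']
  have cell: "wr_cell I n G (m_tensm (wreath_prod I n G) f g) x
    = c_comp (coprod_cat I n G) (wr_cell I n G f (fst (wr_to_Sym I n G D2') x))
        (snd (wr_to_Sym I n G D1) (wr_cell I n G g x))"
    if xC: "x \<in> c_obj (coprod_cat I n G)" for x
  proof -
    obtain i k where x: "x = (i, k)" "i \<in> I" "k \<in> {1..n i}"
      using xC by (rule coprod_objE)
    have "fst (D2 i) k \<in> {1..n i}" "snd (snd (snd (g i) k)) () \<in> carrier (G i)"
      using wreath_prod_objD(2)[OF D2 x(2,3)] g'(5)[OF x(2,3)] by (simp_all add: intertwines_def)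
    then show ?thesis
      using x f'(1,3) g'(1,2) by (simp add: wr_cell_eq wr_to_Sym_obj_eq prod_mcat_def wreath_simps
          Sym_2grp_simps coprod_comp)
  qed
  show ?thesis
    unfolding wr_to_Sym_mor_eq[OF B.tens_obj[OF D1 D2] B.tens_obj[OF D1' D2'] B.tensm_hom[OF D1 D1' D2 D2' f g]]
      wr_to_Sym_mor_eq[OF D1 D1' f] wr_to_Sym_mor_eq[OF D2 D2' g]
    using cell by (auto simp: Sym_2grp_simps wr_to_Sym_tens D1 D1' D2 D2' wr_cell_def intro!: restrict_ext)
qed

lemma wr_to_Sym_mor_assoc:
  assumes D1: "D1 \<in> c_obj (wreath_prod I n G)" and D2: "D2 \<in> c_obj (wreath_prod I n G)"
    and D3: "D3 \<in> c_obj (wreath_prod I n G)"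
  shows "wr_to_Sym_mor I n G (m_assoc (wreath_prod I n G) D1 D2 D3)
    = m_assoc (Sym_2grp (coprod_cat I n G)) (wr_to_Sym I n G D1) (wr_to_Sym I n G D2) (wr_to_Sym I n G D3)"
proof -
  interpret B: mcat_basic "wreath_prod I n G" by (rule mcat_basic_wreath_prod)
  have cell: "wr_cell I n G (m_assoc (wreath_prod I n G) D1 D2 D3) x
    = c_id (coprod_cat I n G) (fst (wr_to_Sym I n G D1) (fst (wr_to_Sym I n G D2) (fst (wr_to_Sym I n G D3) x)))"
    if xC: "x \<in> c_obj (coprod_cat I n G)" for x
  proof -
    obtain i k where x: "x = (i, k)" "i \<in> I" "k \<in> {1..n i}"
      using xC by (rule coprod_objE)
    have "fst (D3 i) k \<in> {1..n i}" "fst (D2 i) (fst (D3 i) k) \<in> {1..n i}"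
      using wreath_prod_objD(2)[OF D3 x(2,3)] wreath_prod_objD(2)[OF D2 x(2)] by simp_all
    then show ?thesis
      using x by (simp add: wr_cell_eq wr_to_Sym_obj_eq prod_mcat_def wreath_simps Sym_2grp_simps coprod_id)
  qed
  show ?thesis
    unfolding wr_to_Sym_mor_eq[OF B.tens_obj[OF D1 B.tens_obj[OF D2 D3]] B.tens_obj[OF B.tens_obj[OF D1 D2] D3]
      B.assoc_hom[OF D1 D2 D3]]
    using cell by (auto simp: Sym_2grp_simps wr_to_Sym_tens D1 D2 D3 B.tens_obj wr_cell_def intro!: restrict_ext)
qed

lemma wr_to_Sym_mor_lu:
  assumes D: "D \<in> c_obj (wreath_prod I n G)"
  shows "wr_to_Sym_mor I n G (m_lu (wreath_prod I n G) D) = m_lu (Sym_2grp (coprod_cat I n G)) (wr_to_Sym I n G D)"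
proof -
  interpret B: mcat_basic "wreath_prod I n G" by (rule mcat_basic_wreath_prod)
  have cell: "wr_cell I n G (m_lu (wreath_prod I n G) D) x = c_id (coprod_cat I n G) (fst (wr_to_Sym I n G D) x)"
    if "x \<in> c_obj (coprod_cat I n G)" for x
    using that by (auto elim!: coprod_objE simp: wr_cell_eq wr_to_Sym_obj_eq prod_mcat_def wreath_simps
        Sym_2grp_simps coprod_id)
  show ?thesis
    unfolding wr_to_Sym_mor_eq[OF B.tens_obj[OF B.unit_obj D] D B.lu_hom[OF D]]
    using cell by (auto simp: Sym_2grp_simps wr_to_Sym_tens D B.unit_obj wr_to_Sym_unit wr_cell_def
        intro!: restrict_ext)
qed

lemma wr_to_Sym_mor_ru:
  assumes D: "D \<in> c_obj (wreath_prod I n G)"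
  shows "wr_to_Sym_mor I n G (m_ru (wreath_prod I n G) D) = m_ru (Sym_2grp (coprod_cat I n G)) (wr_to_Sym I n G D)"
proof -
  interpret B: mcat_basic "wreath_prod I n G" by (rule mcat_basic_wreath_prod)
  have cell: "wr_cell I n G (m_ru (wreath_prod I n G) D) x = c_id (coprod_cat I n G) (fst (wr_to_Sym I n G D) x)"
    if "x \<in> c_obj (coprod_cat I n G)" for x
    using that by (auto elim!: coprod_objE simp: wr_cell_eq wr_to_Sym_obj_eq prod_mcat_def wreath_simps
        Sym_2grp_simps coprod_id)
  show ?thesis
    unfolding wr_to_Sym_mor_eq[OF B.tens_obj[OF D B.unit_obj] D B.ru_hom[OF D]]
    using cell by (auto simp: Sym_2grp_simps wr_to_Sym_tens D B.unit_obj wr_to_Sym_unit wr_cell_def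
        intro!: restrict_ext)
qed

lemma wr_to_Sym_strict_monoidal:
  "strict_monoidal_functor (wreath_prod I n G) (Sym_2grp (coprod_cat I n G)) (wr_to_Sym I n G, wr_to_Sym_mor I n G)"
proof
  show "is_functor (wreath_prod I n G) (Sym_2grp (coprod_cat I n G)) (wr_to_Sym I n G, wr_to_Sym_mor I n G)"
    by (rule is_functorI) (simp_all add: wr_to_Sym_obj wr_to_Sym_mor_hom wr_to_Sym_mor_comp wr_to_Sym_mor_id)
qed (simp_all add: wr_to_Sym_tens wr_to_Sym_unit wr_to_Sym_mor_tensm wr_to_Sym_mor_assoc wr_to_Sym_mor_lu
    wr_to_Sym_mor_ru)

end

locale coprod_of_noniso_groups = coprod_of_groups +
  assumes noniso: "\<lbrakk>i \<in> I; j \<in> I; G i \<cong> G j\<rbrakk> \<Longrightarrow> i = j"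
begin

lemma Sym_coprod_objD:
  assumes F: "F \<in> c_obj (Sym_2grp (coprod_cat I n G))" and i: "i \<in> I" and k: "k \<in> {1..n i}"
  shows "fst F (i, k) = (i, snd (fst F (i, k)))" "snd (fst F (i, k)) \<in> {1..n i}"
    "g \<in> carrier (G i) \<Longrightarrow> snd F (i, k, g) = (i, snd (fst F (i, k)), arrow_part F i k g)"
    "arrow_part F i k \<in> iso (G i) (G i)"
proof -
  have eqv: "is_equivalence (coprod_cat I n G) (coprod_cat I n G) F"
    using F by (simp add: Sym_2grp_obj)
  have x: "(i, k) \<in> c_obj (coprod_cat I n G)"
    using i k by (simp add: coprod_obj_iff)
  obtain j l where jl: "fst F (i, k) = (j, l)"
    by (cases "fst F (i, k)")
  note local = coprod_endofunctor_arrow_part[OF _ x jl]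
  have y: "j \<in> I" "l \<in> {1..n j}"
    using local(1) eqv by (simp_all add: is_equivalence_def coprod_obj_iff)
  have "arrow_part F i k \<in> iso (G i) (G j)"
    by (rule coprod_equivalence_arrow_part_iso[OF eqv x jl])
  then have "j = i"
    using noniso[OF i y(1)] is_isoI by blast
  with jl y local(2) eqv show "fst F (i, k) = (i, snd (fst F (i, k)))" "snd (fst F (i, k)) \<in> {1..n i}"
    "g \<in> carrier (G i) \<Longrightarrow> snd F (i, k, g) = (i, snd (fst F (i, k)), arrow_part F i k g)"
    "arrow_part F i k \<in> iso (G i) (G i)"
    using \<open>arrow_part F i k \<in> iso (G i) (G j)\<close> by (simp_all add: is_equivalence_def)
qed

lemma Sym_coprod_permutes:
  assumes F: "F \<in> c_obj (Sym_2grp (coprod_cat I n G))" and i: "i \<in> I"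
  shows "(\<lambda>k. if k \<in> {1..n i} then snd (fst F (i, k)) else k) permutes {1..n i}"
    (is "?\<sigma> permutes _")
proof (rule bij_imp_permutes)
  have inj: "inj_on (fst F) (c_obj (coprod_cat I n G))"
    using F by (simp add: Sym_2grp_obj coprod_equivalence_inj_obj)
  have inj_\<sigma>: "inj_on ?\<sigma> {1..n i}"
  proof (rule inj_onI)
    fix k k' assume k: "k \<in> {1..n i}" and k': "k' \<in> {1..n i}" and "?\<sigma> k = ?\<sigma> k'"
    then have "fst F (i, k) = fst F (i, k')"
      using Sym_coprod_objD(1)[OF F i k] Sym_coprod_objD(1)[OF F i k'] by simp
    then have "(i, k) = (i, k')"
      by (rule inj_onD[OF inj]) (simp_all add: coprod_obj_iff i k k')
    then show "k = k'"
      by simp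
  qed
  moreover have "?\<sigma> ` {1..n i} \<subseteq> {1..n i}"
    using Sym_coprod_objD(2)[OF F i] by auto
  ultimately show "bij_betw ?\<sigma> {1..n i} {1..n i}"
    unfolding bij_betw_def using endo_inj_surj[OF finite_atLeastAtMost] by blast
qed simp

lemma Sym_to_wr_obj:
  assumes F: "F \<in> c_obj (Sym_2grp (coprod_cat I n G))"
  shows "Sym_to_wr I n G F \<in> c_obj (wreath_prod I n G)"
  using Sym_coprod_permutes[OF F] restrict_iso_in_auto[OF grp Sym_coprod_objD(4)[OF F]]
  by (simp add: wreath_prod_obj_iff Sym_to_wr_def)

lemma wr_to_Sym_Sym_to_wr:
  assumes F: "F \<in> c_obj (Sym_2grp (coprod_cat I n G))"
  shows "wr_to_Sym I n G (Sym_to_wr I n G F) = F"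
proof -
  have ext: "fst F \<in> extensional (c_obj (coprod_cat I n G))" "snd F \<in> extensional (mor (coprod_cat I n G))"
    using F by (simp_all add: Sym_2grp_obj ext_functor_def)
  have obj_eq: "fst (wr_to_Sym I n G (Sym_to_wr I n G F)) x = fst F x" if x: "x \<in> c_obj (coprod_cat I n G)" for x
  proof -
    obtain i k where "x = (i, k)" "i \<in> I" "k \<in> {1..n i}"
      using x by (rule coprod_objE)
    then show ?thesis
      using Sym_coprod_objD(1)[of F i k] F by (simp add: wr_to_Sym_obj_eq Sym_to_wr_def)
  qed
  have mor_eq: "snd (wr_to_Sym I n G (Sym_to_wr I n G F)) f = snd F f" if f: "f \<in> mor (coprod_cat I n G)" for f
  proof -
    obtain i k g where "f = (i, k, g)" "i \<in> I" "k \<in> {1..n i}" "g \<in> carrier (G i)"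
      using f by (rule coprod_morE)
    then show ?thesis
      using Sym_coprod_objD(3)[of F i k g] F by (simp add: wr_to_Sym_obj_eq Sym_to_wr_def)
  qed
  have "fst (wr_to_Sym I n G (Sym_to_wr I n G F)) = fst F" "snd (wr_to_Sym I n G (Sym_to_wr I n G F)) = snd F"
    using ext_functor_coprod_functor[of I n G] unfolding ext_functor_def wr_to_Sym_def
    by (blast intro: extensionalityI[OF _ ext(1) obj_eq[unfolded wr_to_Sym_def]]
        extensionalityI[OF _ ext(2) mor_eq[unfolded wr_to_Sym_def]])+
  then show ?thesis
    by (simp add: prod_eq_iff)
qed

lemma Sym_to_wr_wr_to_Sym:
  assumes D: "D \<in> c_obj (wreath_prod I n G)"
  shows "Sym_to_wr I n G (wr_to_Sym I n G D) = D"
proof (rule extensionalityI)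
  show "D \<in> extensional I"
    using D by (simp add: wreath_prod_obj_iff)
  fix i assume i: "i \<in> I"
  have "(\<lambda>k. if k \<in> {1..n i} then snd (fst (wr_to_Sym I n G D) (i, k)) else k) = fst (D i)"
    using permutes_not_in[OF wreath_prod_objD(1)[OF D i]] by (auto simp: i wr_to_Sym_obj_eq)
  moreover have "(\<lambda>k\<in>{1..n i}. (\<lambda>u. (), \<lambda>g\<in>carrier (G i). arrow_part (wr_to_Sym I n G D) i k g)) = snd (D i)"
  proof (rule extensionalityI)
    show "snd (D i) \<in> extensional {1..n i}"
      using D i by (simp add: wreath_prod_obj_iff)
    fix k assume k: "k \<in> {1..n i}"
    have "snd (snd (D i) k) \<in> extensional (carrier (G i))"
      using wreath_prod_objD(3)[OF D i k] by (simp add: auto_def Bij_def)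
    then have "(\<lambda>g\<in>carrier (G i). arrow_part (wr_to_Sym I n G D) i k g) = snd (snd (D i) k)"
      by (rule extensionalityI[rotated]) (simp_all add: arrow_part_def wr_to_Sym_obj_eq i k)
    then show "(\<lambda>k\<in>{1..n i}. (\<lambda>u. (), \<lambda>g\<in>carrier (G i). arrow_part (wr_to_Sym I n G D) i k g)) k = snd (D i) k"
      using k by (simp add: prod_eq_iff fun_eq_iff)
  qed simp
  ultimately show "Sym_to_wr I n G (wr_to_Sym I n G D) i = D i"
    using i by (simp add: Sym_to_wr_def prod_eq_iff)
qed (simp add: Sym_to_wr_def)

lemma Sym_coprod_homD:
  assumes F: "F \<in> c_obj (Sym_2grp (coprod_cat I n G))" and F': "F' \<in> c_obj (Sym_2grp (coprod_cat I n G))"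
    and m: "m \<in> c_hom (Sym_2grp (coprod_cat I n G)) F F'"
  shows "m = (F, F', snd (snd m))" "snd (snd m) \<in> extensional (c_obj (coprod_cat I n G))"
    and "\<lbrakk>i \<in> I; k \<in> {1..n i}\<rbrakk> \<Longrightarrow> snd (fst F' (i, k)) = snd (fst F (i, k))"
    and "\<lbrakk>i \<in> I; k \<in> {1..n i}\<rbrakk> \<Longrightarrow>
      snd (snd m) (i, k) = (i, snd (fst F (i, k)), snd (snd (snd (snd m) (i, k))))"
    and "\<lbrakk>i \<in> I; k \<in> {1..n i}\<rbrakk> \<Longrightarrow>
      intertwines (G i) (snd (snd (snd (snd m) (i, k)))) (arrow_part F i k) (arrow_part F' i k)"
proof -
  let ?C = "coprod_cat I n G"
  obtain \<alpha> where m': "m = (F, F', \<alpha>)" "nat_trans ?C ?C F F' \<alpha>" "\<alpha> \<in> extensional (c_obj ?C)"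
    using m F F' unfolding Sym_2grp_hom[of ?C F F'] nat_iso_def by auto
  then show "m = (F, F', snd (snd m))" "snd (snd m) \<in> extensional (c_obj ?C)"
    by simp_all
  fix i k assume i: "i \<in> I" and k: "k \<in> {1..n i}"
  have x: "(i, k) \<in> c_obj ?C"
    using i k by (simp add: coprod_obj_iff)
  note component = coprod_nat_trans_component[OF m'(2) x Sym_coprod_objD(1)[OF F i k]]
  then show "snd (fst F' (i, k)) = snd (fst F (i, k))"
    by simp
  show "snd (snd m) (i, k) = (i, snd (fst F (i, k)), snd (snd (snd (snd m) (i, k))))"
    using component(2) m'(1) by simp
  have "intertwines (G i) (snd (snd (\<alpha> (i, k)))) (arrow_part F i k) (arrow_part F' i k)"
    using Sym_coprod_objD(3)[OF F i k] Sym_coprod_objD(3)[OF F' i k] component(1)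
    by (intro coprod_nat_trans_intertwines[OF m'(2) x Sym_coprod_objD(1)[OF F i k]]) simp_all
  then show "intertwines (G i) (snd (snd (snd (snd m) (i, k)))) (arrow_part F i k) (arrow_part F' i k)"
    using m'(1) by simp
qed

lemma Sym_to_wr_mor_hom:
  assumes F: "F \<in> c_obj (Sym_2grp (coprod_cat I n G))" and F': "F' \<in> c_obj (Sym_2grp (coprod_cat I n G))"
    and m: "m \<in> c_hom (Sym_2grp (coprod_cat I n G)) F F'"
  shows "Sym_to_wr_mor I n G m \<in> c_hom (wreath_prod I n G) (Sym_to_wr I n G F) (Sym_to_wr I n G F')"
proof -
  note hom = Sym_coprod_homD[OF F F' m]
  have fm: "fst m = F" "fst (snd m) = F'"
    using hom(1) by (metis fst_conv snd_conv)+
  have "intertwines (G i) (snd (snd (snd (snd m) (i, k))))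
      (\<lambda>g\<in>carrier (G i). arrow_part F i k g) (\<lambda>g\<in>carrier (G i). arrow_part F' i k g)"
    if "i \<in> I" "k \<in> {1..n i}" for i k
    using hom(5)[OF that] by (simp add: intertwines_def)
  then show ?thesis
    unfolding wreath_prod_hom_iff[OF Sym_to_wr_obj[OF F] Sym_to_wr_obj[OF F']]
    using fm hom(3) by (auto simp: Sym_to_wr_mor_def Sym_to_wr_def fun_eq_iff)
qed

lemma wr_to_Sym_mor_Sym_to_wr_mor:
  assumes F: "F \<in> c_obj (Sym_2grp (coprod_cat I n G))" and F': "F' \<in> c_obj (Sym_2grp (coprod_cat I n G))"
    and m: "m \<in> c_hom (Sym_2grp (coprod_cat I n G)) F F'"
  shows "wr_to_Sym_mor I n G (Sym_to_wr_mor I n G m) = m"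
proof -
  note hom = Sym_coprod_homD[OF F F' m]
  obtain \<alpha> where m\<alpha>: "m = (F, F', \<alpha>)"
    using hom(1) by blast
  have "wr_cell I n G (Sym_to_wr_mor I n G m) = \<alpha>"
  proof (rule extensionalityI)
    fix x assume "x \<in> c_obj (coprod_cat I n G)"
    then obtain i k where x: "x = (i, k)" "i \<in> I" "k \<in> {1..n i}"
      by (rule coprod_objE)
    then have "wr_cell I n G (Sym_to_wr_mor I n G m) x = (i, snd (fst F (i, k)), snd (snd (\<alpha> (i, k))))"
      by (simp add: wr_cell_eq Sym_to_wr_mor_def Sym_to_wr_def m\<alpha>)
    also have "\<dots> = \<alpha> x"
      using hom(4)[OF x(2,3)] x(1) by (simp only: m\<alpha> snd_conv)
    finally show "wr_cell I n G (Sym_to_wr_mor I n G m) x = \<alpha> x" .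
  qed (use hom(2) m\<alpha> in \<open>simp_all add: wr_cell_def\<close>)
  then show ?thesis
    using wr_to_Sym_mor_eq[OF Sym_to_wr_obj[OF F] Sym_to_wr_obj[OF F'] Sym_to_wr_mor_hom[OF F F' m]]
    by (simp add: wr_to_Sym_Sym_to_wr F F' m\<alpha>)
qed

lemma Sym_to_wr_mor_wr_to_Sym_mor:
  assumes D: "D \<in> c_obj (wreath_prod I n G)" and D': "D' \<in> c_obj (wreath_prod I n G)"
    and m: "m \<in> c_hom (wreath_prod I n G) D D'"
  shows "Sym_to_wr_mor I n G (wr_to_Sym_mor I n G m) = m"
proof (rule extensionalityI)
  note hom = wreath_prod_homD[OF m D D']
  show "m \<in> extensional I"
    using m D D' by (simp add: wreath_prod_hom_iff)
  fix i assume i: "i \<in> I"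
  have "snd (Sym_to_wr_mor I n G (wr_to_Sym_mor I n G m) i) = snd (m i)"
  proof (rule extensionalityI)
    show "snd (m i) \<in> extensional {1..n i}"
      using m D D' i by (simp add: wreath_prod_hom_iff)
    fix k assume k: "k \<in> {1..n i}"
    have "(\<lambda>u. snd (snd (snd (m i) k)) ()) = snd (snd (snd (m i) k))"
      by auto
    then show "snd (Sym_to_wr_mor I n G (wr_to_Sym_mor I n G m) i) k = snd (m i) k"
      using i k hom(3,4)[OF i k]
      by (simp add: wr_to_Sym_mor_eq[OF D D' m] Sym_to_wr_mor_def Sym_to_wr_wr_to_Sym D D' wr_cell_eq
          prod_eq_iff)
  qed (simp add: Sym_to_wr_mor_def i)
  then show "Sym_to_wr_mor I n G (wr_to_Sym_mor I n G m) i = m i"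
    using i hom(1)[OF i] by (simp add: wr_to_Sym_mor_eq[OF D D' m] Sym_to_wr_mor_def Sym_to_wr_wr_to_Sym D
        prod_eq_iff)
qed (simp add: Sym_to_wr_mor_def)

theorem two_group_iso_Sym_coprod: "two_group_iso (Sym_2grp (coprod_cat I n G)) (wreath_prod I n G)"
proof -
  have "strict_monoidal_iso (wreath_prod I n G) (Sym_2grp (coprod_cat I n G))
      (wr_to_Sym I n G, wr_to_Sym_mor I n G) (Sym_to_wr I n G, Sym_to_wr_mor I n G)"
  proof (rule strict_monoidal_iso.intro[OF mcat_basic_wreath_prod wr_to_Sym_strict_monoidal], unfold_locales)
    fix f assume "f \<in> mor (Sym_2grp (coprod_cat I n G))"
    then obtain F F' where "F \<in> c_obj (Sym_2grp (coprod_cat I n G))" "F' \<in> c_obj (Sym_2grp (coprod_cat I n G))"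
      "f \<in> c_hom (Sym_2grp (coprod_cat I n G)) F F'"
      unfolding mor_iff by blast
    then show "snd (wr_to_Sym I n G, wr_to_Sym_mor I n G) (snd (Sym_to_wr I n G, Sym_to_wr_mor I n G) f) = f"
      by (simp add: wr_to_Sym_mor_Sym_to_wr_mor)
  next
    fix g assume "g \<in> mor (wreath_prod I n G)"
    then obtain D D' where "D \<in> c_obj (wreath_prod I n G)" "D' \<in> c_obj (wreath_prod I n G)"
      "g \<in> c_hom (wreath_prod I n G) D D'"
      unfolding mor_iff by blast
    then show "snd (Sym_to_wr I n G, Sym_to_wr_mor I n G) (snd (wr_to_Sym I n G, wr_to_Sym_mor I n G) g) = g"
      by (simp add: Sym_to_wr_mor_wr_to_Sym_mor)
  qed (simp_all add: Sym_to_wr_obj Sym_to_wr_mor_hom wr_to_Sym_Sym_to_wr Sym_to_wr_wr_to_Sym)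
  then show ?thesis
    by (rule strict_monoidal_iso.two_group_iso)
qed

end

theorem theorem4p14:
  fixes I :: "'i set" and n :: "'i \<Rightarrow> nat" and G :: "'i \<Rightarrow> 'g monoid"
  assumes "\<forall>i\<in>I. n i \<ge> 1"
    and "\<forall>i\<in>I. group (G i)"
    and "\<forall>i\<in>I. \<forall>i'\<in>I. i \<noteq> i' \<longrightarrow> \<not> (G i \<cong> G i')"
  shows "two_group_iso (Sym_2grp (coprod_cat I n G))
           (prod_mcat I (\<lambda>i. wreath (n i) (Sym_2grp (grp_cat (G i)))))"
proof -
  have "coprod_of_noniso_groups I G"
    using assms(2,3) unfolding coprod_of_noniso_groups_def coprod_of_groups_def
      coprod_of_noniso_groups_axioms_def by blast
  then interpret coprod_of_noniso_groups I n G .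
  show ?thesis
    by (rule two_group_iso_Sym_coprod)
qed

end
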